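(* Assume that $R,\dot R,\ddot R,\dddot R$ satisfy the bicolored tetrahedron equations for every $\sigma\in\mathbb{Z}/2\mathbb{Z}$ and all spectral parameters, that $\dddot R^{[\sigma]}(r_1,r_2,r_3)$ is invertible for all $\sigma$ and all $r_1,r_2,r_3\in C$, and that for every $\sigma$ and all parameters of two planes $3<4$ (larger than all $1_l$ and $2_m$) the trace reduction $\ddot{\mathbf R}^{[\sigma]}_{34}$ is invertible. Then for all $\sigma\in\mathbb{Z}/2\mathbb{Z}$ and all $r,r'\in C$, $$T^{[\sigma]}(r)\,\dot T^{[\sigma+1]}(r')=\dot T^{[\sigma]}(r')\,T^{[\sigma+1]}(r)$$ as operators on $W=\bigotimes_{l,m}V_{(1_l2_m)}$.
   Context: Let $V$ be a finite-dimensional complex vector space and $C$ a set (of spectral parameters). Let $R,\dot R,\ddot R,\dddot R:\mathbb{Z}/2\mathbb{Z}\times C^3\to\mathrm{End}(V\otimes V\otimes V)$ be maps; write $X^{[\sigma]}(r_1,r_2,r_3)$ for the value of $X\in\{R,\dot R,\ddot R,\dddot R\}$ at $(\sigma,r_1,r_2,r_3)$. Superscript colors $[\sigma]$ are always read modulo 2. Notation: consider a finite totally ordered set of "planes", each plane $\alpha$ carrying a parameter $r_\alpha\in C$. For each pair $\alpha<\beta$ let $V_{(\alpha\beta)}$ be a copy of $V$. For $\alpha<\beta<\gamma$, $X^{[\sigma]}_{(\alpha\beta\gamma)}$ denotes the operator on the tensor product of all the spaces $V_{(\cdot\cdot)}$ under consideration that acts as $X^{[\sigma]}(r_\alpha,r_\beta,r_\gamma)$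 on $V_{(\alpha\beta)}\otimes V_{(\alpha\gamma)}\otimes V_{(\beta\gamma)}$ (in this order) and as the identity on all other factors. Bicolored tetrahedron equations (BTE$[\sigma]$): for any four planes $1<2<3<4$ with arbitrary parameters $r_1,r_2,r_3,r_4\in C$, on $V_{(12)}\otimes V_{(13)}\otimes V_{(14)}\otimes V_{(23)}\otimes V_{(24)}\otimes V_{(34)}$, $$R^{[\sigma]}_{(123)}\dot R^{[\sigma+1]}_{(124)}\ddot R^{[\sigma]}_{(134)}\dddot R^{[\sigma+1]}_{(234)}=\dddot R^{[\sigma]}_{(234)}\ddot R^{[\sigma+1]}_{(134)}\dot R^{[\sigma]}_{(124)}R^{[\sigma+1]}_{(123)}.$$ Fix integers $L,M\ge1$, planes $1_1<\dots<1_{2L}<2_1<\dots<2_{2M}$ with fixed arbitrary parameters $r_{1_l},r_{2_m}\in C$. Trace reduction: for planes $\alpha<\beta$ larger than all $1_l$, define $$\mathbf{R}^{[\sigma]}_{\alpha\beta}:=\mathrm{Tr}_{V_{(\alpha\beta)}}\Bigl(R^{[\sigma+1]}_{(1_1\alpha\beta)}R^{[\sigma+2]}_{(1_2\alpha\beta)}\cdots R^{[\sigma+2L]}_{(1_{2L}\alpha\beta)}\Bigr)$$ (partial trace over $V_{(\alpha\beta)}$), an operator on $\bigotimes_l(V_{(1_l\alpha)}\otimes V_{(1_l\beta)})$; $\dot{\mathbf R},\ddot{\mathbf R}$ are defined likewise from $\dot R,\ddot R$. Layer transfer matrix: for $r\in C$, let $3$ be an extra plane larger than all $2_m$ with parameter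 $r_3=r$, and set $$T^{[\sigma]}(r):=\mathrm{Tr}_{\bigotimes_l V_{(1_l3)}}\Bigl(\mathbf R^{[\sigma+1]}_{2_1 3}\,\mathbf R^{[\sigma+2]}_{2_2 3}\cdots\mathbf R^{[\sigma+2M]}_{2_{2M}3}\Bigr),$$ an operator on $W=\bigotimes_{l,m}V_{(1_l2_m)}$ (it depends only on $r$, not on the label of the extra plane). $\dot T^{[\sigma]}(r)$ is defined the same way with $\mathbf R$ replaced by $\dot{\mathbf R}$. *)

theory Defs
  imports "HOL-Analysis.Analysis" "HOL-Library.Z2" "HOL-Library.FuncSet"
begin

text \<open>Colors live in Z/2Z, modelled by the two-element field bit.
  V is modelled as C^'b for a finite basis type 'b; an operator on a tensor product
  of copies of V indexed by a finite set S of slots is given by its matrix entries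
  A x y (out-configuration x, in-configuration y), where configurations are
  extensional functions S \<rightarrow>E UNIV.\<close>

type_synonym 'b op3 = "'b \<times> 'b \<times> 'b \<Rightarrow> 'b \<times> 'b \<times> 'b \<Rightarrow> complex"
type_synonym ('c, 'b) Rfam = "bit \<Rightarrow> 'c \<Rightarrow> 'c \<Rightarrow> 'c \<Rightarrow> 'b op3"
type_synonym ('s, 'b) sop = "('s \<Rightarrow> 'b) \<Rightarrow> ('s \<Rightarrow> 'b) \<Rightarrow> complex"

text \<open>Planes: A l = 1_(l+1), B m = 2_(m+1), E k = extra planes (larger than all A, B).\<close>
datatype plane = A nat | B nat | E nat

type_synonym slot = "plane \<times> plane"

definition cfg :: "'s set \<Rightarrow> ('s \<Rightarrow> 'b) set" where
  "cfg S = S \<rightarrow>\<^sub>E UNIV"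

definition op_eq :: "'s set \<Rightarrow> ('s, 'b) sop \<Rightarrow> ('s, 'b) sop \<Rightarrow> bool" where
  "op_eq S X Y \<longleftrightarrow> (\<forall>x\<in>cfg S. \<forall>y\<in>cfg S. X x y = Y x y)"

definition op_id :: "'s set \<Rightarrow> ('s, 'b) sop" where
  "op_id S = (\<lambda>x y. if x = y then 1 else 0)"

definition op_mult :: "'s set \<Rightarrow> ('s, 'b::finite) sop \<Rightarrow> ('s, 'b) sop \<Rightarrow> ('s, 'b) sop" where
  "op_mult S X Y = (\<lambda>x y. \<Sum>z\<in>cfg S. X x z * Y z y)"

definition op_prod :: "'s set \<Rightarrow> ('s, 'b::finite) sop list \<Rightarrow> ('s, 'b) sop" where
  "op_prod S Xs = foldr (op_mult S) Xs (op_id S)"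

definition op_invertible :: "'s set \<Rightarrow> ('s, 'b::finite) sop \<Rightarrow> bool" where
  "op_invertible S X \<longleftrightarrow> (\<exists>Y. op_eq S (op_mult S X Y) (op_id S) \<and> op_eq S (op_mult S Y X) (op_id S))"

definition op3_on :: "'s \<times> 's \<times> 's \<Rightarrow> 'b op3 \<Rightarrow> ('s, 'b) sop" where
  "op3_on s X = (case s of (s1, s2, s3) \<Rightarrow>
     (\<lambda>x y. X (x s1, x s2, x s3) (y s1, y s2, y s3)))"

definition embed :: "'s set \<Rightarrow> 's set \<Rightarrow> ('s, 'b) sop \<Rightarrow> ('s, 'b) sop" where
  "embed S T X = (\<lambda>x y. X (restrict x T) (restrict y T) *
     (if \<forall>s\<in>S - T. x s = y s then 1 else 0))"

definition ptrace :: "'s set \<Rightarrow> 's set \<Rightarrow> ('s, 'b::finite) sop \<Rightarrow> ('s, 'b) sop" where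
  "ptrace S T X = (\<lambda>x y. \<Sum>z\<in>cfg T.
     X (\<lambda>s. if s \<in> T then z s else x s) (\<lambda>s. if s \<in> T then z s else y s))"

definition loc :: "slot set \<Rightarrow> ('c, 'b) Rfam \<Rightarrow> bit \<Rightarrow> plane \<Rightarrow> plane \<Rightarrow> plane
    \<Rightarrow> 'c \<Rightarrow> 'c \<Rightarrow> 'c \<Rightarrow> (slot, 'b) sop" where
  "loc S X \<sigma> a b c ra rb rc =
     embed S {(a, b), (a, c), (b, c)} (op3_on ((a, b), (a, c), (b, c)) (X \<sigma> ra rb rc))"

definition S6 :: "slot set" where
  "S6 = {(E i, E j) | i j. 1 \<le> i \<and> i < j \<and> j \<le> 4}"

definition BTE :: "('c, 'b::finite) Rfam \<Rightarrow> ('c, 'b) Rfam \<Rightarrow> ('c, 'b) Rfam \<Rightarrow> ('c, 'b) Rfam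
    \<Rightarrow> bit \<Rightarrow> bool" where
  "BTE R R1 R2 R3 \<sigma> \<longleftrightarrow> (\<forall>r1 r2 r3 r4.
     op_eq S6
       (op_prod S6 [loc S6 R \<sigma> (E 1) (E 2) (E 3) r1 r2 r3,
                    loc S6 R1 (\<sigma> + 1) (E 1) (E 2) (E 4) r1 r2 r4,
                    loc S6 R2 \<sigma> (E 1) (E 3) (E 4) r1 r3 r4,
                    loc S6 R3 (\<sigma> + 1) (E 2) (E 3) (E 4) r2 r3 r4])
       (op_prod S6 [loc S6 R3 \<sigma> (E 2) (E 3) (E 4) r2 r3 r4,
                    loc S6 R2 (\<sigma> + 1) (E 1) (E 3) (E 4) r1 r3 r4,
                    loc S6 R1 \<sigma> (E 1) (E 2) (E 4) r1 r2 r4,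
                    loc S6 R (\<sigma> + 1) (E 1) (E 2) (E 3) r1 r2 r3]))"

definition invertible3 :: "'b::finite op3 \<Rightarrow> bool" where
  "invertible3 X \<longleftrightarrow> (\<exists>Y. (\<forall>x y. (\<Sum>z\<in>UNIV. X x z * Y z y) = (if x = y then 1 else 0)) \<and>
                          (\<forall>x y. (\<Sum>z\<in>UNIV. Y x z * X z y) = (if x = y then 1 else 0)))"

definition Rsl :: "nat \<Rightarrow> plane \<Rightarrow> plane \<Rightarrow> slot set" where
  "Rsl L \<alpha> \<beta> = {(A l, \<alpha>) | l. l < 2 * L} \<union> {(A l, \<beta>) | l. l < 2 * L}"

definition boldR :: "('c, 'b::finite) Rfam \<Rightarrow> nat \<Rightarrow> (nat \<Rightarrow> 'c) \<Rightarrow> bit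
    \<Rightarrow> plane \<Rightarrow> plane \<Rightarrow> 'c \<Rightarrow> 'c \<Rightarrow> (slot, 'b) sop" where
  "boldR X L rA \<sigma> \<alpha> \<beta> ra rb =
     (let S = Rsl L \<alpha> \<beta> \<union> {(\<alpha>, \<beta>)} in
      ptrace S {(\<alpha>, \<beta>)}
        (op_prod S (map (\<lambda>l. loc S X (\<sigma> + of_nat (l + 1)) (A l) \<alpha> \<beta> (rA l) ra rb) [0..<2 * L])))"

definition Wsl :: "nat \<Rightarrow> nat \<Rightarrow> slot set" where
  "Wsl L M = {(A l, B m) | l m. l < 2 * L \<and> m < 2 * M}"

text \<open>Layer transfer matrix T^[sigma](r), extra plane 3 = E 0.\<close>
definition Tlayer :: "('c, 'b::finite) Rfam \<Rightarrow> nat \<Rightarrow> nat \<Rightarrow> (nat \<Rightarrow> 'c) \<Rightarrow> (nat \<Rightarrow> 'c)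
    \<Rightarrow> bit \<Rightarrow> 'c \<Rightarrow> (slot, 'b) sop" where
  "Tlayer X L M rA rB \<sigma> r =
     (let Tr = {(A l, E 0) | l. l < 2 * L}; S = Wsl L M \<union> Tr in
      ptrace S Tr
        (op_prod S (map (\<lambda>m. embed S (Rsl L (B m) (E 0))
                      (boldR X L rA (\<sigma> + of_nat (m + 1)) (B m) (E 0) (rB m) r)) [0..<2 * M])))"

end

theory Submission
  imports Defs
begin

text \<open>Both exchange relations come from one telescoping argument (\<open>ptrace_prod_intertwined\<close>): if
  X(i) G(i+1) = G(i) Y(i) for i < n and G(n) = G(0) is invertible on the traced spaces, then the
  intertwiners telescope to a conjugation by G(0), so the partial traces of X(0)...X(n-1) and
  Y(0)...Y(n-1) agree. Along the planes 1_l, with the tetrahedron equations as local relations and R3 as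
  intertwiner, this gives the Yang--Baxter equation of the trace reductions (\<open>bold_YBE\<close>). Along the
  planes 2_m, with these bold Yang--Baxter equations as local relations and the trace reduction of R2 as
  intertwiner, it gives the exchange relation of the transfer matrices. Both chains consist of an even
  number of planes, so the alternating colours come back to their initial value and G(n) = G(0).\<close>

section \<open>Operators on tensor products of slot spaces\<close>

lemma mem_cfg_iff: "x \<in> cfg S \<longleftrightarrow> (\<forall>s. s \<notin> S \<longrightarrow> x s = undefined)"
  by (auto simp: cfg_def PiE_def extensional_def)

lemma finite_cfg [simp]: "finite S \<Longrightarrow> finite (cfg S :: ('s \<Rightarrow> 'b::finite) set)"
  unfolding cfg_def by (intro finite_PiE) auto

lemma cfg_mono: "x \<in> cfg S' \<Longrightarrow> S' \<subseteq> S \<Longrightarrow> x \<in> cfg S"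
  by (auto simp: mem_cfg_iff)

lemma restrict_in_cfg [simp]: "restrict x T \<in> cfg T"
  by (auto simp: mem_cfg_iff)

lemma restrict_cfg_self: "x \<in> cfg S \<Longrightarrow> restrict x S = x"
  by (auto simp: mem_cfg_iff fun_eq_iff)

lemma override_on_in_cfg: "x \<in> cfg (S - T) \<Longrightarrow> z \<in> cfg T \<Longrightarrow> T \<subseteq> S \<Longrightarrow> override_on x z T \<in> cfg S"
  by (auto simp: mem_cfg_iff override_on_def)

lemma restrict_override_on [simp]: "z \<in> cfg T \<Longrightarrow> restrict (override_on x z T) T = z"
  by (auto simp: mem_cfg_iff fun_eq_iff)

lemma sum_cfg_split:
  fixes f :: "('s \<Rightarrow> 'b::finite) \<Rightarrow> 'a::comm_monoid_add"
  assumes "finite S" "T \<subseteq> S"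
  shows "(\<Sum>w\<in>cfg S. f w) = (\<Sum>x\<in>cfg (S - T). \<Sum>z\<in>cfg T. f (override_on x z T))"
proof -
  have "bij_betw (\<lambda>(x, z). override_on x z T) (cfg (S - T) \<times> cfg T) (cfg S)"
    by (rule bij_betw_byWitness[where f' = "\<lambda>w. (restrict w (S - T), restrict w T)"])
      (use assms in \<open>auto simp: mem_cfg_iff fun_eq_iff override_on_def\<close>)
  from sum.reindex_bij_betw[OF this, of f]
  have "(\<Sum>w\<in>cfg S. f w) = (\<Sum>(x, z)\<in>cfg (S - T) \<times> cfg T. f (override_on x z T))"
    by (simp add: case_prod_unfold)
  also have "\<dots> = (\<Sum>x\<in>cfg (S - T). \<Sum>z\<in>cfg T. f (override_on x z T))"
    using assms by (subst sum.cartesian_product) (auto simp: finite_subset)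
  finally show ?thesis .
qed

lemma sum_cfg_collapse:
  fixes f :: "('s \<Rightarrow> 'b::finite) \<Rightarrow> 'a::comm_semiring_1"
  assumes "finite S" "T \<subseteq> S" "y \<in> cfg S"
  shows "(\<Sum>w\<in>cfg S. f w * (if \<forall>s\<in>S - T. w s = y s then 1 else 0)) = (\<Sum>z\<in>cfg T. f (override_on y z T))"
    and "(\<Sum>w\<in>cfg S. (if \<forall>s\<in>S - T. y s = w s then 1 else 0) * f w) = (\<Sum>z\<in>cfg T. f (override_on y z T))"
proof -
  define y0 where "y0 = restrict y (S - T)"
  have agree: "(\<forall>s\<in>S - T. x s = y s) \<longleftrightarrow> x = y0" if "x \<in> cfg (S - T)" for x
    using that by (auto simp: mem_cfg_iff fun_eq_iff y0_def)
  have y0: "override_on y0 z T = override_on y z T" for z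
    using assms(3) by (auto simp: mem_cfg_iff override_on_def fun_eq_iff y0_def)
  have "(\<Sum>w\<in>cfg S. f w * (if \<forall>s\<in>S - T. w s = y s then 1 else 0))
      = (\<Sum>x\<in>cfg (S - T). if x = y0 then \<Sum>z\<in>cfg T. f (override_on x z T) else 0)"
    unfolding sum_cfg_split[OF assms(1,2)]
    by (intro sum.cong refl) (simp add: agree)
  also have "\<dots> = (\<Sum>z\<in>cfg T. f (override_on y z T))"
    using assms by (simp add: y0 finite_subset) (simp add: y0_def)
  finally show "(\<Sum>w\<in>cfg S. f w * (if \<forall>s\<in>S - T. w s = y s then 1 else 0)) = (\<Sum>z\<in>cfg T. f (override_on y z T))" .
  then show "(\<Sum>w\<in>cfg S. (if \<forall>s\<in>S - T. y s = w s then 1 else 0) * f w) = (\<Sum>z\<in>cfg T. f (override_on y z T))"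
    by (simp add: mult.commute eq_commute)
qed

lemma op_eq_refl [simp]: "op_eq S X X"
  by (simp add: op_eq_def)

lemma op_eq_sym: "op_eq S X Y \<Longrightarrow> op_eq S Y X"
  by (simp add: op_eq_def)

lemma op_eq_trans [trans]: "op_eq S X Y \<Longrightarrow> op_eq S Y Z \<Longrightarrow> op_eq S X Z"
  by (simp add: op_eq_def)

lemma op_eq_subset: "op_eq S X Y \<Longrightarrow> S' \<subseteq> S \<Longrightarrow> op_eq S' X Y"
  by (auto simp: op_eq_def intro: cfg_mono)

lemma op_mult_cong: "op_eq S X X' \<Longrightarrow> op_eq S Y Y' \<Longrightarrow> op_eq S (op_mult S X Y) (op_mult S X' Y')"
  by (auto simp: op_eq_def op_mult_def intro!: sum.cong)

lemma op_mult_assoc: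
  fixes X :: "('s, 'b::finite) sop"
  assumes "finite S"
  shows "op_eq S (op_mult S (op_mult S X Y) Z) (op_mult S X (op_mult S Y Z))"
  unfolding op_eq_def op_mult_def
  by (auto simp: sum_distrib_left sum_distrib_right mult.assoc intro: sum.swap[THEN trans])

lemma op_mult_id_left:
  fixes X :: "('s, 'b::finite) sop"
  assumes "finite S"
  shows "op_eq S (op_mult S (op_id S) X) X"
proof -
  have "(\<Sum>z\<in>cfg S. (if x = z then 1 else 0) * X z y) = (\<Sum>z\<in>cfg S. if x = z then X z y else 0)" for x y
    by (rule sum.cong) auto
  then show ?thesis
    using assms by (simp add: op_eq_def op_mult_def op_id_def)
qed

lemma op_mult_id_right:
  fixes X :: "('s, 'b::finite) sop"
  assumes "finite S"
  shows "op_eq S (op_mult S X (op_id S)) X"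
proof -
  have "(\<Sum>z\<in>cfg S. X x z * (if z = y then 1 else 0)) = (\<Sum>z\<in>cfg S. if z = y then X x z else 0)" for x y
    by (rule sum.cong) auto
  then show ?thesis
    using assms by (simp add: op_eq_def op_mult_def op_id_def)
qed

lemma op_prod_Nil [simp]: "op_prod S [] = op_id S"
  by (simp add: op_prod_def)

lemma op_prod_Cons [simp]: "op_prod S (x # xs) = op_mult S x (op_prod S xs)"
  by (simp add: op_prod_def)

lemma op_prod_snoc:
  fixes xs :: "('s, 'b::finite) sop list"
  assumes "finite S"
  shows "op_eq S (op_prod S (xs @ [y])) (op_mult S (op_prod S xs) y)"
proof (induction xs)
  case Nil
  show ?case
    using op_eq_trans[OF op_mult_id_right op_eq_sym[OF op_mult_id_left]] assms by simp
next
  case (Cons x xs)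
  have "op_eq S (op_prod S ((x # xs) @ [y])) (op_mult S x (op_mult S (op_prod S xs) y))"
    using Cons by (simp add: op_mult_cong)
  also have "op_eq S \<dots> (op_mult S (op_prod S (x # xs)) y)"
    by (simp add: op_eq_sym op_mult_assoc assms)
  finally show ?case .
qed

lemma op_prod_cong:
  "(\<And>x. x \<in> set xs \<Longrightarrow> op_eq S (F x) (G x)) \<Longrightarrow> op_eq S (op_prod S (map F xs)) (op_prod S (map G xs))"
  by (induction xs) (auto intro!: op_mult_cong)

lemma embed_embed:
  fixes X :: "('s, 'b) sop"
  assumes "U \<subseteq> T" "T \<subseteq> S"
  shows "embed S T (embed T U X) = embed S U X"
proof (intro ext)
  fix x y :: "'s \<Rightarrow> 'b"
  have "restrict (restrict x T) U = restrict x U" for x :: "'s \<Rightarrow> 'b"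
    using assms by (auto simp: fun_eq_iff)
  moreover have "((\<forall>s\<in>T - U. restrict x T s = restrict y T s) \<and> (\<forall>s\<in>S - T. x s = y s))
      \<longleftrightarrow> (\<forall>s\<in>S - U. x s = y s)"
    using assms by auto
  ultimately show "embed S T (embed T U X) x y = embed S U X x y"
    unfolding embed_def by (cases "\<forall>s\<in>S - U. x s = y s") auto
qed

lemma embed_cong: "op_eq T X Y \<Longrightarrow> op_eq S (embed S T X) (embed S T Y)"
  by (auto simp: op_eq_def embed_def)

lemma embed_subset:
  fixes X :: "('s, 'b) sop"
  assumes "U \<subseteq> S'" "S' \<subseteq> S"
  shows "op_eq S' (embed S U X) (embed S' U X)"
proof -
  have "(\<forall>s\<in>S - U. x s = y s) \<longleftrightarrow> (\<forall>s\<in>S' - U. x s = y s)" if "x \<in> cfg S'" "y \<in> cfg S'" for x y :: "'s \<Rightarrow> 'b"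
    using that assms by (auto simp: mem_cfg_iff) (metis Diff_iff)
  then show ?thesis
    by (simp add: op_eq_def embed_def)
qed

lemma embed_self: "op_eq S (embed S S X) X"
  by (simp add: op_eq_def embed_def restrict_cfg_self)

lemma embed_id:
  assumes "T \<subseteq> S"
  shows "op_eq S (embed S T (op_id T)) (op_id S :: ('s, 'b) sop)"
proof -
  have "(restrict x T = restrict y T \<and> (\<forall>s\<in>S - T. x s = y s)) \<longleftrightarrow> x = y"
    if "x \<in> cfg S" "y \<in> cfg S" for x y :: "'s \<Rightarrow> 'b"
  proof
    assume eq: "restrict x T = restrict y T \<and> (\<forall>s\<in>S - T. x s = y s)"
    show "x = y"
    proof
      fix s
      show "x s = y s"
      proof (cases "s \<in> T")
        case True
        then show ?thesis
          using fun_cong[OF conjunct1[OF eq], of s] by simp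
      next
        case False
        then show ?thesis
          using eq that by (cases "s \<in> S") (auto simp: mem_cfg_iff)
      qed
    qed
  qed simp
  then show ?thesis
    by (auto simp: op_eq_def embed_def op_id_def)
qed

lemma embed_mult:
  fixes X :: "('s, 'b::finite) sop"
  assumes "finite S" "T \<subseteq> S"
  shows "op_eq S (op_mult S (embed S T X) (embed S T Y)) (embed S T (op_mult T X Y))"
  unfolding op_eq_def
proof (intro ballI)
  fix x y :: "'s \<Rightarrow> 'b" assume x: "x \<in> cfg S" and y: "y \<in> cfg S"
  have "op_mult S (embed S T X) (embed S T Y) x y
     = (\<Sum>w\<in>cfg S. (if \<forall>s\<in>S - T. x s = w s then 1 else 0) *
          (X (restrict x T) (restrict w T) * Y (restrict w T) (restrict y T) *
           (if \<forall>s\<in>S - T. w s = y s then 1 else 0)))"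
    unfolding op_mult_def embed_def by (simp add: mult_ac)
  also have "\<dots> = (\<Sum>z\<in>cfg T. X (restrict x T) z * Y z (restrict y T)) *
                    (if \<forall>s\<in>S - T. x s = y s then 1 else 0)"
    by (simp add: sum_cfg_collapse(2)[OF assms x] sum_distrib_right cong: sum.cong)
  also have "\<dots> = embed S T (op_mult T X Y) x y"
    by (simp add: embed_def op_mult_def)
  finally show "op_mult S (embed S T X) (embed S T Y) x y = embed S T (op_mult T X Y) x y" .
qed

lemma embed_prod:
  fixes xs :: "('s, 'b::finite) sop list"
  assumes "finite S" "T \<subseteq> S"
  shows "op_eq S (embed S T (op_prod T xs)) (op_prod S (map (embed S T) xs))"
proof (induction xs)
  case Nil
  then show ?case by (simp add: embed_id assms)
next
  case (Cons x xs)
  have "op_eq S (embed S T (op_prod T (x # xs))) (op_mult S (embed S T x) (embed S T (op_prod T xs)))"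
    by (simp add: op_eq_sym embed_mult assms)
  also have "op_eq S \<dots> (op_prod S (map (embed S T) (x # xs)))"
    using Cons by (simp add: op_mult_cong)
  finally show ?case .
qed

lemma embed_mult_disjoint:
  fixes X :: "('s, 'b::finite) sop"
  assumes "finite S" "U1 \<subseteq> S" "U2 \<subseteq> S" "U1 \<inter> U2 = {}" "x \<in> cfg S" "y \<in> cfg S"
  shows "op_mult S (embed S U1 X) (embed S U2 Y) x y
       = X (restrict x U1) (restrict y U1) * Y (restrict x U2) (restrict y U2) *
         (if \<forall>s\<in>S - (U1 \<union> U2). x s = y s then 1 else 0)"
proof -
  have agree: "(\<forall>s\<in>S - U2. override_on x z U1 s = y s)
      \<longleftrightarrow> z = restrict y U1 \<and> (\<forall>s\<in>S - (U1 \<union> U2). x s = y s)" if "z \<in> cfg U1" for z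
  proof
    assume eq: "\<forall>s\<in>S - U2. override_on x z U1 s = y s"
    have "z s = y s" if "s \<in> U1" for s
      using eq[rule_format, of s] that assms(2,4) by auto
    moreover have "x s = y s" if "s \<in> S - (U1 \<union> U2)" for s
      using eq[rule_format, of s] that by auto
    ultimately show "z = restrict y U1 \<and> (\<forall>s\<in>S - (U1 \<union> U2). x s = y s)"
      using that by (auto simp: mem_cfg_iff fun_eq_iff)
  qed (auto simp: override_on_def)
  have U2: "restrict (override_on x z U1) U2 = restrict x U2" for z
    using assms(4) by (auto simp: fun_eq_iff override_on_def)
  have "op_mult S (embed S U1 X) (embed S U2 Y) x y
     = (\<Sum>w\<in>cfg S. (if \<forall>s\<in>S - U1. x s = w s then 1 else 0) *
          (X (restrict x U1) (restrict w U1) * Y (restrict w U2) (restrict y U2) *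
           (if \<forall>s\<in>S - U2. w s = y s then 1 else 0)))"
    unfolding op_mult_def embed_def by (simp add: mult_ac)
  also have "\<dots> = (\<Sum>z\<in>cfg U1. if z = restrict y U1 then X (restrict x U1) z * Y (restrict x U2) (restrict y U2) *
          (if \<forall>s\<in>S - (U1 \<union> U2). x s = y s then 1 else 0) else 0)"
    unfolding sum_cfg_collapse(2)[OF assms(1,2,5)]
    by (intro sum.cong refl) (simp add: U2 agree)
  also have "\<dots> = X (restrict x U1) (restrict y U1) * Y (restrict x U2) (restrict y U2) *
          (if \<forall>s\<in>S - (U1 \<union> U2). x s = y s then 1 else 0)"
    using assms by (simp add: finite_subset)
  finally show ?thesis .
qed

lemma embed_commute:
  fixes X :: "('s, 'b::finite) sop"
  assumes "finite S" "U1 \<subseteq> S" "U2 \<subseteq> S" "U1 \<inter> U2 = {}"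
  shows "op_eq S (op_mult S (embed S U1 X) (embed S U2 Y)) (op_mult S (embed S U2 Y) (embed S U1 X))"
  using assms by (simp add: op_eq_def embed_mult_disjoint Int_commute Un_commute mult.commute)

definition acts_on :: "'s set \<Rightarrow> 's set \<Rightarrow> ('s, 'b) sop \<Rightarrow> bool" where
  "acts_on S U P \<longleftrightarrow> U \<subseteq> S \<and> (\<exists>P'. op_eq S P (embed S U P'))"

lemma acts_on_embed: "U \<subseteq> S \<Longrightarrow> acts_on S U (embed S U X)"
  unfolding acts_on_def by (intro conjI exI[of _ X]) auto

lemma acts_on_mono:
  assumes "acts_on S U P" "U \<subseteq> U'" "U' \<subseteq> S"
  shows "acts_on S U' P"
proof -
  obtain P' where "op_eq S P (embed S U P')"
    using assms(1) by (auto simp: acts_on_def)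
  then have "op_eq S P (embed S U' (embed U' U P'))"
    by (simp only: embed_embed[OF assms(2,3)])
  with assms(3) show ?thesis
    unfolding acts_on_def by blast
qed

lemma acts_on_subset:
  assumes "acts_on S U P" "U \<subseteq> S'" "S' \<subseteq> S"
  shows "acts_on S' U P"
proof -
  obtain P' where "op_eq S P (embed S U P')"
    using assms(1) by (auto simp: acts_on_def)
  then have "op_eq S' P (embed S' U P')"
    by (rule op_eq_trans[OF op_eq_subset[OF _ assms(3)] embed_subset[OF assms(2,3)]])
  with assms(2) show ?thesis
    unfolding acts_on_def by blast
qed

lemma acts_on_mult:
  fixes P :: "('s, 'b::finite) sop"
  assumes "finite S" "acts_on S U P" "acts_on S U Q"
  shows "acts_on S U (op_mult S P Q)"
proof -
  obtain P' Q' where P': "op_eq S P (embed S U P')" and Q': "op_eq S Q (embed S U Q')" and "U \<subseteq> S"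
    using assms by (auto simp: acts_on_def)
  have "op_eq S (op_mult S P Q) (embed S U (op_mult U P' Q'))"
    by (rule op_eq_trans[OF op_mult_cong[OF P' Q'] embed_mult[OF assms(1) \<open>U \<subseteq> S\<close>]])
  with \<open>U \<subseteq> S\<close> show ?thesis
    unfolding acts_on_def by blast
qed

lemma acts_on_id: "U \<subseteq> S \<Longrightarrow> acts_on S U (op_id S)"
  unfolding acts_on_def using op_eq_sym[OF embed_id] by blast

lemma acts_on_prod:
  fixes Ps :: "('s, 'b::finite) sop list"
  assumes "finite S" "U \<subseteq> S" "\<And>P. P \<in> set Ps \<Longrightarrow> acts_on S U P"
  shows "acts_on S U (op_prod S Ps)"
  using assms(3)
proof (induction Ps)
  case Nil
  then show ?case
    by (simp add: acts_on_id assms(2))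
next
  case (Cons P Ps)
  then show ?case
    by (simp add: acts_on_mult assms(1))
qed

lemma op_mult_subset:
  fixes P :: "('s, 'b::finite) sop"
  assumes "finite S" "acts_on S U P" "U \<subseteq> S'" "S' \<subseteq> S"
  shows "op_eq S' (op_mult S P X) (op_mult S' P X)"
  unfolding op_eq_def op_mult_def
proof (intro ballI)
  fix x y :: "'s \<Rightarrow> 'b" assume x: "x \<in> cfg S'" and y: "y \<in> cfg S'"
  obtain P' where P': "op_eq S P (embed S U P')"
    using assms(2) by (auto simp: acts_on_def)
  have "P x w = 0" if w: "w \<in> cfg S - cfg S'" for w
  proof -
    obtain s where s: "s \<notin> S'" "w s \<noteq> undefined" "s \<in> S"
      using w by (auto simp: mem_cfg_iff)
    then have "\<not> (\<forall>s\<in>S - U. x s = w s)"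
      using x assms(3) by (auto simp: mem_cfg_iff intro!: bexI[of _ s])
    then show ?thesis
      using P' cfg_mono[OF x assms(4)] w unfolding op_eq_def embed_def by auto
  qed
  moreover have "cfg S' \<subseteq> cfg S"
    using assms(4) cfg_mono by blast
  ultimately show "(\<Sum>z\<in>cfg S. P x z * X z y) = (\<Sum>z\<in>cfg S'. P x z * X z y)"
    using assms(1) by (intro sum.mono_neutral_right) auto
qed

lemma op_prod_4:
  fixes P1 :: "('s, 'b::finite) sop"
  assumes "finite S"
  shows "op_eq S (op_prod S [P1, P2, P3, P4]) (op_mult S P1 (op_mult S P2 (op_mult S P3 P4)))"
    and "op_eq S (op_prod S [P1, P2, P3, P4]) (op_mult S (op_mult S P1 (op_mult S P2 P3)) P4)"
proof -
  show P: "op_eq S (op_prod S [P1, P2, P3, P4]) (op_mult S P1 (op_mult S P2 (op_mult S P3 P4)))"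
    by (simp add: op_mult_cong op_mult_id_right assms)
  also have "op_eq S \<dots> (op_mult S P1 (op_mult S (op_mult S P2 P3) P4))"
    by (rule op_mult_cong[OF op_eq_refl op_eq_sym[OF op_mult_assoc[OF assms]]])
  also have "op_eq S \<dots> (op_mult S (op_mult S P1 (op_mult S P2 P3)) P4)"
    by (rule op_eq_sym[OF op_mult_assoc[OF assms]])
  finally show "op_eq S (op_prod S [P1, P2, P3, P4]) (op_mult S (op_mult S P1 (op_mult S P2 P3)) P4)" .
qed

definition commutes :: "'s set \<Rightarrow> ('s, 'b::finite) sop \<Rightarrow> ('s, 'b) sop \<Rightarrow> bool" where
  "commutes S P Q \<longleftrightarrow> op_eq S (op_mult S P Q) (op_mult S Q P)"

lemma commutes_sym: "commutes S P Q \<Longrightarrow> commutes S Q P"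
  by (simp add: commutes_def op_eq_sym)

lemma commutes_mult:
  fixes P :: "('s, 'b::finite) sop"
  assumes S: "finite S" and "commutes S P Q1" "commutes S P Q2"
  shows "commutes S P (op_mult S Q1 Q2)"
proof -
  have "op_eq S (op_mult S P (op_mult S Q1 Q2)) (op_mult S (op_mult S P Q1) Q2)"
    by (rule op_eq_sym[OF op_mult_assoc[OF S]])
  also have "op_eq S \<dots> (op_mult S (op_mult S Q1 P) Q2)"
    using assms(2) unfolding commutes_def by (rule op_mult_cong) simp
  also have "op_eq S \<dots> (op_mult S Q1 (op_mult S P Q2))"
    by (rule op_mult_assoc[OF S])
  also have "op_eq S \<dots> (op_mult S Q1 (op_mult S Q2 P))"
    using assms(3) unfolding commutes_def by (rule op_mult_cong[OF op_eq_refl])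
  also have "op_eq S \<dots> (op_mult S (op_mult S Q1 Q2) P)"
    by (rule op_eq_sym[OF op_mult_assoc[OF S]])
  finally show ?thesis
    by (simp add: commutes_def)
qed

lemma commutes_prod:
  fixes P :: "('s, 'b::finite) sop"
  assumes "finite S" "\<And>Q. Q \<in> set Qs \<Longrightarrow> commutes S P Q"
  shows "commutes S P (op_prod S Qs)"
  using assms(2)
proof (induction Qs)
  case Nil
  show ?case
    using op_eq_trans[OF op_mult_id_right op_eq_sym[OF op_mult_id_left]] assms(1)
    by (simp add: commutes_def)
next
  case (Cons Q Qs)
  then show ?case
    by (simp add: commutes_mult assms(1))
qed

lemma acts_on_disjoint_commutes:
  fixes P :: "('s, 'b::finite) sop"
  assumes S: "finite S" and "acts_on S U1 P" "acts_on S U2 Q" "U1 \<inter> U2 = {}"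
  shows "commutes S P Q"
proof -
  obtain P' Q' where P': "op_eq S P (embed S U1 P')" and Q': "op_eq S Q (embed S U2 Q')"
    and "U1 \<subseteq> S" "U2 \<subseteq> S"
    using assms by (auto simp: acts_on_def)
  have "op_eq S (op_mult S P Q) (op_mult S (embed S U1 P') (embed S U2 Q'))"
    using P' Q' by (rule op_mult_cong)
  also have "op_eq S \<dots> (op_mult S (embed S U2 Q') (embed S U1 P'))"
    by (rule embed_commute[OF S \<open>U1 \<subseteq> S\<close> \<open>U2 \<subseteq> S\<close> assms(4)])
  also have "op_eq S \<dots> (op_mult S Q P)"
    using op_mult_cong[OF op_eq_sym[OF Q'] op_eq_sym[OF P']] .
  finally show ?thesis
    by (simp add: commutes_def)
qed

lemma op_prod_telescope:
  fixes X :: "nat \<Rightarrow> ('s, 'b::finite) sop"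
  assumes S: "finite S"
    and step: "\<And>i. i < n \<Longrightarrow> op_eq S (op_mult S (X i) (G (Suc i))) (op_mult S (G i) (Y i))"
  shows "op_eq S (op_mult S (op_prod S (map X [0..<n])) (G n)) (op_mult S (G 0) (op_prod S (map Y [0..<n])))"
  using step
proof (induction n)
  case 0
  show ?case
    using op_eq_trans[OF op_mult_id_left[OF S] op_eq_sym[OF op_mult_id_right[OF S]]] by simp
next
  case (Suc n)
  let ?P = "op_prod S (map X [0..<n])" and ?Q = "op_prod S (map Y [0..<n])"
  have IH: "op_eq S (op_mult S ?P (G n)) (op_mult S (G 0) ?Q)"
    using Suc by simp
  have "op_eq S (op_mult S (op_prod S (map X [0..<Suc n])) (G (Suc n))) (op_mult S (op_mult S ?P (X n)) (G (Suc n)))"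
    using op_mult_cong[OF op_prod_snoc[OF S] op_eq_refl] by simp
  also have "op_eq S \<dots> (op_mult S ?P (op_mult S (X n) (G (Suc n))))"
    by (rule op_mult_assoc[OF S])
  also have "op_eq S \<dots> (op_mult S ?P (op_mult S (G n) (Y n)))"
    by (rule op_mult_cong[OF op_eq_refl Suc.prems]) simp
  also have "op_eq S \<dots> (op_mult S (op_mult S ?P (G n)) (Y n))"
    by (rule op_eq_sym[OF op_mult_assoc[OF S]])
  also have "op_eq S \<dots> (op_mult S (op_mult S (G 0) ?Q) (Y n))"
    by (rule op_mult_cong[OF IH op_eq_refl])
  also have "op_eq S \<dots> (op_mult S (G 0) (op_mult S ?Q (Y n)))"
    by (rule op_mult_assoc[OF S])
  also have "op_eq S \<dots> (op_mult S (G 0) (op_prod S (map Y [0..<Suc n])))"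
    using op_mult_cong[OF op_eq_refl op_eq_sym[OF op_prod_snoc[OF S]]] by simp
  finally show ?case .
qed

lemma op_prod_mult_distrib:
  fixes P :: "nat \<Rightarrow> ('s, 'b::finite) sop"
  assumes S: "finite S" and comm: "\<And>i j. i < j \<Longrightarrow> j < n \<Longrightarrow> commutes S (Q i) (P j)"
  shows "op_eq S (op_prod S (map (\<lambda>i. op_mult S (P i) (Q i)) [0..<n]))
                 (op_mult S (op_prod S (map P [0..<n])) (op_prod S (map Q [0..<n])))"
  using comm
proof (induction n)
  case 0
  show ?case
    using op_eq_sym[OF op_mult_id_left[OF S]] by simp
next
  case (Suc n)
  let ?P = "op_prod S (map P [0..<n])" and ?Q = "op_prod S (map Q [0..<n])"
  have IH: "op_eq S (op_prod S (map (\<lambda>i. op_mult S (P i) (Q i)) [0..<n])) (op_mult S ?P ?Q)"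
    using Suc by simp
  have "commutes S (P n) ?Q"
    by (rule commutes_prod[OF S]) (use Suc.prems in \<open>auto intro: commutes_sym\<close>)
  then have swap: "op_eq S (op_mult S ?Q (P n)) (op_mult S (P n) ?Q)"
    unfolding commutes_def by (rule op_eq_sym)
  have "op_eq S (op_prod S (map (\<lambda>i. op_mult S (P i) (Q i)) [0..<Suc n]))
      (op_mult S (op_mult S ?P ?Q) (op_mult S (P n) (Q n)))"
    using op_eq_trans[OF op_prod_snoc[OF S] op_mult_cong[OF IH op_eq_refl]] by simp
  also have "op_eq S \<dots> (op_mult S ?P (op_mult S (op_mult S ?Q (P n)) (Q n)))"
    using op_eq_trans[OF op_mult_assoc[OF S] op_mult_cong[OF op_eq_refl op_eq_sym[OF op_mult_assoc[OF S]]]] .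
  also have "op_eq S \<dots> (op_mult S ?P (op_mult S (op_mult S (P n) ?Q) (Q n)))"
    by (intro op_mult_cong[OF op_eq_refl] op_mult_cong[OF swap op_eq_refl])
  also have "op_eq S \<dots> (op_mult S (op_mult S ?P (P n)) (op_mult S ?Q (Q n)))"
    using op_eq_trans[OF op_mult_cong[OF op_eq_refl op_mult_assoc[OF S]] op_eq_sym[OF op_mult_assoc[OF S]]] .
  also have "op_eq S \<dots> (op_mult S (op_prod S (map P [0..<Suc n])) (op_prod S (map Q [0..<Suc n])))"
    using op_mult_cong[OF op_eq_sym[OF op_prod_snoc[OF S]] op_eq_sym[OF op_prod_snoc[OF S]]] by simp
  finally show ?case .
qed

section \<open>Partial traces\<close>

lemma override_on_override_on_same [simp]: "override_on (override_on y z T) u T = override_on y u T"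
  by (simp add: override_on_def fun_eq_iff)

lemma restrict_override_on_disjoint: "U \<inter> T = {} \<Longrightarrow> restrict (override_on x z T) U = restrict x U"
  by (auto simp: override_on_def fun_eq_iff)

lemma override_on_commute:
  "U \<inter> T = {} \<Longrightarrow> override_on (override_on x z T) u U = override_on (override_on x u U) z T"
  by (auto simp: override_on_def fun_eq_iff)

lemma ptrace_override: "ptrace S T X x y = (\<Sum>z\<in>cfg T. X (override_on x z T) (override_on y z T))"
  by (simp add: ptrace_def override_on_def)

lemma ptrace_cong:
  fixes X :: "('s, 'b::finite) sop"
  assumes "T \<subseteq> S" "op_eq S X Y"
  shows "op_eq (S - T) (ptrace S T X) (ptrace S T Y)"
  unfolding op_eq_def ptrace_override
proof (intro ballI sum.cong refl)
  fix x y z :: "'s \<Rightarrow> 'b" assume "x \<in> cfg (S - T)" "y \<in> cfg (S - T)" "z \<in> cfg T"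
  with assms(1) have "override_on x z T \<in> cfg S" "override_on y z T \<in> cfg S"
    by (simp_all add: override_on_in_cfg)
  with assms(2) show "X (override_on x z T) (override_on y z T) = Y (override_on x z T) (override_on y z T)"
    by (simp add: op_eq_def)
qed

lemma ptrace_mult_embed_left:
  fixes P :: "('s, 'b::finite) sop"
  assumes S: "finite S" and T: "T \<subseteq> S" and U: "U \<subseteq> S - T"
  shows "op_eq (S - T) (ptrace S T (op_mult S (embed S U P) X))
           (op_mult (S - T) (embed (S - T) U P) (ptrace S T X))"
  unfolding op_eq_def
proof (intro ballI)
  fix x y :: "'s \<Rightarrow> 'b" assume x: "x \<in> cfg (S - T)" and y: "y \<in> cfg (S - T)"
  have disj: "U \<inter> T = {}" and US: "U \<subseteq> S"
    using U by auto
  have "ptrace S T (op_mult S (embed S U P) X) x y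
      = (\<Sum>z\<in>cfg T. \<Sum>w\<in>cfg S. (if \<forall>s\<in>S - U. override_on x z T s = w s then 1 else 0) *
            (P (restrict (override_on x z T) U) (restrict w U) * X w (override_on y z T)))"
    unfolding ptrace_override op_mult_def embed_def by (simp add: mult_ac)
  also have "\<dots> = (\<Sum>z\<in>cfg T. \<Sum>u\<in>cfg U. P (restrict x U) u * X (override_on (override_on x u U) z T) (override_on y z T))"
  proof (rule sum.cong[OF refl])
    fix z :: "'s \<Rightarrow> 'b" assume z: "z \<in> cfg T"
    have "override_on x z T \<in> cfg S"
      using x z T by (rule override_on_in_cfg)
    then show "(\<Sum>w\<in>cfg S. (if \<forall>s\<in>S - U. override_on x z T s = w s then 1 else 0) *
            (P (restrict (override_on x z T) U) (restrict w U) * X w (override_on y z T)))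
        = (\<Sum>u\<in>cfg U. P (restrict x U) u * X (override_on (override_on x u U) z T) (override_on y z T))"
      by (simp add: sum_cfg_collapse(2)[OF S US] restrict_override_on_disjoint[OF disj]
          override_on_commute[OF disj] cong: sum.cong)
  qed
  also have "\<dots> = (\<Sum>u\<in>cfg U. P (restrict x U) u * (\<Sum>z\<in>cfg T. X (override_on (override_on x u U) z T) (override_on y z T)))"
    by (subst sum.swap) (simp add: sum_distrib_left)
  also have "\<dots> = (\<Sum>w\<in>cfg (S - T). (if \<forall>s\<in>(S - T) - U. x s = w s then 1 else 0) *
            (P (restrict x U) (restrict w U) * ptrace S T X w y))"
    using S by (simp add: sum_cfg_collapse(2)[OF _ U x] ptrace_override cong: sum.cong)
  also have "\<dots> = op_mult (S - T) (embed (S - T) U P) (ptrace S T X) x y"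
    unfolding op_mult_def embed_def by (simp add: mult_ac)
  finally show "ptrace S T (op_mult S (embed S U P) X) x y = op_mult (S - T) (embed (S - T) U P) (ptrace S T X) x y" .
qed

lemma ptrace_mult_embed_right:
  fixes P :: "('s, 'b::finite) sop"
  assumes S: "finite S" and T: "T \<subseteq> S" and U: "U \<subseteq> S - T"
  shows "op_eq (S - T) (ptrace S T (op_mult S X (embed S U P)))
           (op_mult (S - T) (ptrace S T X) (embed (S - T) U P))"
  unfolding op_eq_def
proof (intro ballI)
  fix x y :: "'s \<Rightarrow> 'b" assume x: "x \<in> cfg (S - T)" and y: "y \<in> cfg (S - T)"
  have disj: "U \<inter> T = {}" and US: "U \<subseteq> S"
    using U by auto
  have "ptrace S T (op_mult S X (embed S U P)) x y
      = (\<Sum>z\<in>cfg T. \<Sum>w\<in>cfg S. (X (override_on x z T) w * P (restrict w U) (restrict (override_on y z T) U)) *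
           (if \<forall>s\<in>S - U. w s = override_on y z T s then 1 else 0))"
    unfolding ptrace_override op_mult_def embed_def by (simp add: mult_ac)
  also have "\<dots> = (\<Sum>z\<in>cfg T. \<Sum>u\<in>cfg U. X (override_on x z T) (override_on (override_on y u U) z T) * P u (restrict y U))"
  proof (rule sum.cong[OF refl])
    fix z :: "'s \<Rightarrow> 'b" assume z: "z \<in> cfg T"
    have "override_on y z T \<in> cfg S"
      using y z T by (rule override_on_in_cfg)
    then show "(\<Sum>w\<in>cfg S. (X (override_on x z T) w * P (restrict w U) (restrict (override_on y z T) U)) *
           (if \<forall>s\<in>S - U. w s = override_on y z T s then 1 else 0))
        = (\<Sum>u\<in>cfg U. X (override_on x z T) (override_on (override_on y u U) z T) * P u (restrict y U))"
      by (simp add: sum_cfg_collapse(1)[OF S US] restrict_override_on_disjoint[OF disj]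
          override_on_commute[OF disj] cong: sum.cong)
  qed
  also have "\<dots> = (\<Sum>u\<in>cfg U. (\<Sum>z\<in>cfg T. X (override_on x z T) (override_on (override_on y u U) z T)) * P u (restrict y U))"
    by (subst sum.swap) (simp add: sum_distrib_right)
  also have "\<dots> = (\<Sum>w\<in>cfg (S - T). (ptrace S T X x w * P (restrict w U) (restrict y U)) *
           (if \<forall>s\<in>(S - T) - U. w s = y s then 1 else 0))"
    using S by (simp add: sum_cfg_collapse(1)[OF _ U y] ptrace_override cong: sum.cong)
  also have "\<dots> = op_mult (S - T) (ptrace S T X) (embed (S - T) U P) x y"
    unfolding op_mult_def embed_def by (simp add: mult_ac)
  finally show "ptrace S T (op_mult S X (embed S U P)) x y = op_mult (S - T) (ptrace S T X) (embed (S - T) U P) x y" .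
qed

lemma ptrace_mult_left:
  fixes P :: "('s, 'b::finite) sop"
  assumes S: "finite S" and T: "T \<subseteq> S" and P: "acts_on S U P" and disj: "U \<inter> T = {}"
  shows "op_eq (S - T) (ptrace S T (op_mult S P X)) (op_mult (S - T) P (ptrace S T X))"
proof -
  obtain P' where P': "op_eq S P (embed S U P')" and "U \<subseteq> S"
    using P by (auto simp: acts_on_def)
  then have U: "U \<subseteq> S - T"
    using disj by auto
  have "op_eq (S - T) (ptrace S T (op_mult S P X)) (ptrace S T (op_mult S (embed S U P') X))"
    by (rule ptrace_cong[OF T op_mult_cong[OF P' op_eq_refl]])
  also have "op_eq (S - T) \<dots> (op_mult (S - T) (embed (S - T) U P') (ptrace S T X))"
    by (rule ptrace_mult_embed_left[OF S T U])
  also have "op_eq (S - T) \<dots> (op_mult (S - T) P (ptrace S T X))"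
    using op_eq_trans[OF op_eq_sym[OF embed_subset[OF U]] op_eq_subset[OF op_eq_sym[OF P']]]
    by (intro op_mult_cong[OF _ op_eq_refl]) auto
  finally show ?thesis .
qed

lemma ptrace_mult_right:
  fixes P :: "('s, 'b::finite) sop"
  assumes S: "finite S" and T: "T \<subseteq> S" and P: "acts_on S U P" and disj: "U \<inter> T = {}"
  shows "op_eq (S - T) (ptrace S T (op_mult S X P)) (op_mult (S - T) (ptrace S T X) P)"
proof -
  obtain P' where P': "op_eq S P (embed S U P')" and "U \<subseteq> S"
    using P by (auto simp: acts_on_def)
  then have U: "U \<subseteq> S - T"
    using disj by auto
  have "op_eq (S - T) (ptrace S T (op_mult S X P)) (ptrace S T (op_mult S X (embed S U P')))"
    by (rule ptrace_cong[OF T op_mult_cong[OF op_eq_refl P']])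
  also have "op_eq (S - T) \<dots> (op_mult (S - T) (ptrace S T X) (embed (S - T) U P'))"
    by (rule ptrace_mult_embed_right[OF S T U])
  also have "op_eq (S - T) \<dots> (op_mult (S - T) (ptrace S T X) P)"
    using op_eq_trans[OF op_eq_sym[OF embed_subset[OF U]] op_eq_subset[OF op_eq_sym[OF P']]]
    by (intro op_mult_cong[OF op_eq_refl]) auto
  finally show ?thesis .
qed

lemma ptrace_Un:
  fixes X :: "('s, 'b::finite) sop"
  assumes "finite S" "T1 \<union> T2 \<subseteq> S" "T1 \<inter> T2 = {}"
  shows "op_eq (S - (T1 \<union> T2)) (ptrace S (T1 \<union> T2) X) (ptrace (S - T1) T2 (ptrace S T1 X))"
proof -
  have "(T1 \<union> T2) - T1 = T2"
    using assms(3) by auto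
  moreover have "override_on x (override_on z2 z1 T1) (T1 \<union> T2) = override_on (override_on x z2 T2) z1 T1"
    for x z1 z2 :: "'s \<Rightarrow> 'b"
    by (auto simp: override_on_def fun_eq_iff)
  ultimately show ?thesis
    using assms unfolding op_eq_def ptrace_override
    by (subst sum_cfg_split[of "T1 \<union> T2" T1]) (auto simp: finite_subset)
qed

lemma ptrace_embed:
  fixes P :: "('s, 'b::finite) sop"
  assumes Q: "op_eq S Q (embed S U P)" and "T \<subseteq> U" "U \<subseteq> S"
  shows "op_eq (S - T) (ptrace S T Q) (embed (S - T) (U - T) (ptrace U T P))"
proof -
  have "op_eq (S - T) (ptrace S T Q) (ptrace S T (embed S U P))"
    by (rule ptrace_cong[OF _ Q]) (use assms in auto)
  moreover have "op_eq (S - T) (ptrace S T (embed S U P)) (embed (S - T) (U - T) (ptrace U T P))"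
  proof -
    have "restrict (override_on x z T) U = override_on (restrict x (U - T)) z T" for x z :: "'s \<Rightarrow> 'b"
      using assms by (auto simp: override_on_def fun_eq_iff)
    moreover have "(\<forall>s\<in>S - U. override_on x z T s = override_on y z T s) \<longleftrightarrow> (\<forall>s\<in>S - T - (U - T). x s = y s)"
      for x y z :: "'s \<Rightarrow> 'b"
      using assms by (auto simp: override_on_def)
    ultimately show ?thesis
      unfolding op_eq_def ptrace_override embed_def by (simp add: sum_distrib_right)
  qed
  ultimately show ?thesis
    by (rule op_eq_trans)
qed

lemma ptrace_acts_on:
  fixes P :: "('s, 'b::finite) sop"
  assumes "acts_on S U P" "T \<subseteq> U"
  shows "acts_on (S - T) (U - T) (ptrace S T P)"
proof -
  obtain P' where "op_eq S P (embed S U P')" "U \<subseteq> S"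
    using assms(1) by (auto simp: acts_on_def)
  then show ?thesis
    using ptrace_embed[OF _ assms(2)] unfolding acts_on_def by blast
qed

lemma ptrace_mult_disjoint:
  fixes P1 :: "('s, 'b::finite) sop"
  assumes S: "finite S" and P1: "acts_on S V1 P1" and P2: "acts_on S V2 P2"
    and "T1 \<subseteq> V1" "T2 \<subseteq> V2" "T1 \<inter> V2 = {}" "T2 \<inter> V1 = {}"
  shows "op_eq (S - (T1 \<union> T2)) (ptrace S (T1 \<union> T2) (op_mult S P1 P2))
           (op_mult (S - (T1 \<union> T2)) (ptrace S T1 P1) (ptrace S T2 P2))"
proof -
  have V: "V1 \<subseteq> S" "V2 \<subseteq> S"
    using P1 P2 by (auto simp: acts_on_def)
  have T2: "T2 \<subseteq> S - T1" and ST: "S - T1 - T2 = S - (T1 \<union> T2)"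
    using assms V by auto
  have "op_eq (S - (T1 \<union> T2)) (ptrace S (T1 \<union> T2) (op_mult S P1 P2))
      (ptrace (S - T1) T2 (ptrace S T1 (op_mult S P1 P2)))"
    by (rule ptrace_Un) (use assms V in auto)
  also have "op_eq (S - (T1 \<union> T2)) \<dots> (ptrace (S - T1) T2 (op_mult (S - T1) (ptrace S T1 P1) P2))"
  proof -
    have "op_eq (S - T1) (ptrace S T1 (op_mult S P1 P2)) (op_mult (S - T1) (ptrace S T1 P1) P2)"
      by (rule ptrace_mult_right[OF S _ P2]) (use assms V in auto)
    from ptrace_cong[OF T2 this] show ?thesis
      unfolding ST .
  qed
  also have "op_eq (S - (T1 \<union> T2)) \<dots> (op_mult (S - (T1 \<union> T2)) (ptrace S T1 P1) (ptrace (S - T1) T2 P2))"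
  proof -
    have "op_eq (S - T1 - T2) (ptrace (S - T1) T2 (op_mult (S - T1) (ptrace S T1 P1) P2))
        (op_mult (S - T1 - T2) (ptrace S T1 P1) (ptrace (S - T1) T2 P2))"
      by (rule ptrace_mult_left[OF _ T2 ptrace_acts_on[OF P1 \<open>T1 \<subseteq> V1\<close>]]) (use S assms in auto)
    then show ?thesis
      unfolding ST .
  qed
  also have "ptrace (S - T1) T2 P2 = ptrace S T2 P2"
    by (simp add: ptrace_def)
  finally show ?thesis .
qed

lemma ptrace_mult3_disjoint:
  fixes P1 :: "('s, 'b::finite) sop"
  assumes S: "finite S" and P: "acts_on S V1 P1" "acts_on S V2 P2" "acts_on S V3 P3"
    and T: "T1 \<subseteq> V1" "T2 \<subseteq> V2" "T3 \<subseteq> V3"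
    and disj: "T1 \<inter> (V2 \<union> V3) = {}" "T2 \<inter> (V1 \<union> V3) = {}" "T3 \<inter> (V1 \<union> V2) = {}"
  shows "op_eq (S - (T1 \<union> (T2 \<union> T3))) (ptrace S (T1 \<union> (T2 \<union> T3)) (op_mult S P1 (op_mult S P2 P3)))
           (op_mult (S - (T1 \<union> (T2 \<union> T3))) (ptrace S T1 P1)
              (op_mult (S - (T1 \<union> (T2 \<union> T3))) (ptrace S T2 P2) (ptrace S T3 P3)))"
proof -
  let ?S0 = "S - (T1 \<union> (T2 \<union> T3))"
  have V: "V1 \<subseteq> S" "V2 \<subseteq> S" "V3 \<subseteq> S"
    using P by (auto simp: acts_on_def)
  have P23: "acts_on S (V2 \<union> V3) (op_mult S P2 P3)"
    using V by (intro acts_on_mult[OF S] acts_on_mono[OF P(2)] acts_on_mono[OF P(3)]) auto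
  have "op_eq ?S0 (ptrace S (T1 \<union> (T2 \<union> T3)) (op_mult S P1 (op_mult S P2 P3)))
      (op_mult ?S0 (ptrace S T1 P1) (ptrace S (T2 \<union> T3) (op_mult S P2 P3)))"
    by (rule ptrace_mult_disjoint[OF S P(1) P23]) (use T disj in auto)
  also have "op_eq ?S0 \<dots> (op_mult ?S0 (ptrace S T1 P1) (op_mult ?S0 (ptrace S T2 P2) (ptrace S T3 P3)))"
  proof (rule op_mult_cong[OF op_eq_refl])
    have split: "op_eq (S - (T2 \<union> T3)) (ptrace S (T2 \<union> T3) (op_mult S P2 P3))
        (op_mult (S - (T2 \<union> T3)) (ptrace S T2 P2) (ptrace S T3 P3))"
      by (rule ptrace_mult_disjoint[OF S P(2,3) T(2,3)]) (use disj in auto)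
    have "acts_on (S - (T2 \<union> T3)) (V2 - T2) (ptrace S T2 P2)"
      by (rule acts_on_subset[OF ptrace_acts_on[OF P(2) T(2)]]) (use V disj in auto)
    then have restrict: "op_eq ?S0 (op_mult (S - (T2 \<union> T3)) (ptrace S T2 P2) (ptrace S T3 P3))
        (op_mult ?S0 (ptrace S T2 P2) (ptrace S T3 P3))"
      by (rule op_mult_subset[rotated]) (use S disj V in auto)
    show "op_eq ?S0 (ptrace S (T2 \<union> T3) (op_mult S P2 P3))
        (op_mult ?S0 (ptrace S T2 P2) (ptrace S T3 P3))"
      by (rule op_eq_trans[OF op_eq_subset[OF split] restrict]) auto
  qed
  finally show ?thesis .
qed

lemma ptrace_prod_embed:
  fixes Z :: "'i \<Rightarrow> ('s, 'b::finite) sop"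
  assumes S: "finite S" and V: "V \<subseteq> S" "T \<subseteq> V" and U: "\<And>i. i \<in> set xs \<Longrightarrow> U i \<subseteq> V"
  shows "op_eq (S - T) (ptrace S T (op_prod S (map (\<lambda>i. embed S (U i) (Z i)) xs)))
           (embed (S - T) (V - T) (ptrace V T (op_prod V (map (\<lambda>i. embed V (U i) (Z i)) xs))))"
proof -
  have "map (\<lambda>i. embed S (U i) (Z i)) xs = map (embed S V) (map (\<lambda>i. embed V (U i) (Z i)) xs)"
    using U by (simp add: embed_embed[OF _ V(1)])
  then have "op_eq S (op_prod S (map (\<lambda>i. embed S (U i) (Z i)) xs))
      (embed S V (op_prod V (map (\<lambda>i. embed V (U i) (Z i)) xs)))"
    by (simp only: op_eq_sym[OF embed_prod[OF S V(1)]])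
  then show ?thesis
    by (rule ptrace_embed[OF _ V(2,1)])
qed

lemma ptrace_cyclic:
  fixes X :: "('s, 'b::finite) sop"
  assumes S: "finite S" and T: "T \<subseteq> S"
  shows "op_eq (S - T) (ptrace S T (op_mult S X (embed S T H))) (ptrace S T (op_mult S (embed S T H) X))"
  unfolding op_eq_def
proof (intro ballI)
  fix x y :: "'s \<Rightarrow> 'b" assume x: "x \<in> cfg (S - T)" and y: "y \<in> cfg (S - T)"
  have xz: "override_on x z T \<in> cfg S" and yz: "override_on y z T \<in> cfg S" if "z \<in> cfg T" for z
    using override_on_in_cfg[OF x that T] override_on_in_cfg[OF y that T] by auto
  have "ptrace S T (op_mult S X (embed S T H)) x y
      = (\<Sum>z\<in>cfg T. \<Sum>w\<in>cfg S. (X (override_on x z T) w * H (restrict w T) (restrict (override_on y z T) T)) *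
           (if \<forall>s\<in>S - T. w s = override_on y z T s then 1 else 0))"
    unfolding ptrace_override op_mult_def embed_def by (simp add: mult_ac)
  also have "\<dots> = (\<Sum>z\<in>cfg T. \<Sum>u\<in>cfg T. X (override_on x z T) (override_on y u T) * H u z)"
  proof (rule sum.cong[OF refl])
    fix z :: "'s \<Rightarrow> 'b" assume z: "z \<in> cfg T"
    show "(\<Sum>w\<in>cfg S. (X (override_on x z T) w * H (restrict w T) (restrict (override_on y z T) T)) *
           (if \<forall>s\<in>S - T. w s = override_on y z T s then 1 else 0))
        = (\<Sum>u\<in>cfg T. X (override_on x z T) (override_on y u T) * H u z)"
      by (subst sum_cfg_collapse(1)[OF S T yz[OF z]]) (simp add: z cong: sum.cong)
  qed
  also have "\<dots> = (\<Sum>z\<in>cfg T. \<Sum>u\<in>cfg T. H z u * X (override_on x u T) (override_on y z T))"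
    by (subst sum.swap) (simp add: mult.commute)
  also have "\<dots> = (\<Sum>z\<in>cfg T. \<Sum>w\<in>cfg S. (if \<forall>s\<in>S - T. override_on x z T s = w s then 1 else 0) *
           (H (restrict (override_on x z T) T) (restrict w T) * X w (override_on y z T)))"
  proof (rule sum.cong[OF refl])
    fix z :: "'s \<Rightarrow> 'b" assume z: "z \<in> cfg T"
    show "(\<Sum>u\<in>cfg T. H z u * X (override_on x u T) (override_on y z T))
        = (\<Sum>w\<in>cfg S. (if \<forall>s\<in>S - T. override_on x z T s = w s then 1 else 0) *
           (H (restrict (override_on x z T) T) (restrict w T) * X w (override_on y z T)))"
      by (subst sum_cfg_collapse(2)[OF S T xz[OF z]]) (simp add: z cong: sum.cong)
  qed
  also have "\<dots> = ptrace S T (op_mult S (embed S T H) X) x y"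
    unfolding ptrace_override op_mult_def embed_def by (simp add: mult_ac)
  finally show "ptrace S T (op_mult S X (embed S T H)) x y = ptrace S T (op_mult S (embed S T H) X) x y" .
qed

lemma ptrace_similar:
  fixes X :: "('s, 'b::finite) sop"
  assumes S: "finite S" and T: "T \<subseteq> S" and inv: "op_invertible T H"
    and XY: "op_eq S (op_mult S X (embed S T H)) (op_mult S (embed S T H) Y)"
  shows "op_eq (S - T) (ptrace S T X) (ptrace S T Y)"
proof -
  obtain H' where HH': "op_eq T (op_mult T H H') (op_id T)" and H'H: "op_eq T (op_mult T H' H) (op_id T)"
    using inv by (auto simp: op_invertible_def)
  let ?G = "embed S T H" and ?G' = "embed S T H'"
  have GG': "op_eq S (op_mult S ?G ?G') (op_id S)"
    by (rule op_eq_trans[OF embed_mult[OF S T] op_eq_trans[OF embed_cong[OF HH'] embed_id[OF T]]])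
  have G'G: "op_eq S (op_mult S ?G' ?G) (op_id S)"
    by (rule op_eq_trans[OF embed_mult[OF S T] op_eq_trans[OF embed_cong[OF H'H] embed_id[OF T]]])
  have "op_eq S X (op_mult S (op_mult S X ?G) ?G')"
    using op_eq_trans[OF op_mult_assoc[OF S] op_eq_trans[OF op_mult_cong[OF op_eq_refl GG'] op_mult_id_right[OF S]]]
    by (rule op_eq_sym)
  also have "op_eq S \<dots> (op_mult S (op_mult S ?G Y) ?G')"
    by (rule op_mult_cong[OF XY op_eq_refl])
  finally have "op_eq (S - T) (ptrace S T X) (ptrace S T (op_mult S (op_mult S ?G Y) ?G'))"
    by (rule ptrace_cong[OF T])
  also have "op_eq (S - T) \<dots> (ptrace S T (op_mult S ?G' (op_mult S ?G Y)))"
    by (rule ptrace_cyclic[OF S T])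
  also have "op_eq (S - T) \<dots> (ptrace S T Y)"
    using op_eq_trans[OF op_eq_sym[OF op_mult_assoc[OF S]] op_eq_trans[OF op_mult_cong[OF G'G op_eq_refl] op_mult_id_left[OF S]]]
    by (rule ptrace_cong[OF T])
  finally show ?thesis .
qed

lemma ptrace_prod_intertwined:
  fixes X :: "nat \<Rightarrow> ('s, 'b::finite) sop"
  assumes S: "finite S" and T: "T \<subseteq> S" and inv: "op_invertible T H"
    and G0: "G 0 = embed S T H" and Gn: "G n = G 0"
    and step: "\<And>i. i < n \<Longrightarrow> op_eq S (op_mult S (X i) (G (Suc i))) (op_mult S (G i) (Y i))"
  shows "op_eq (S - T) (ptrace S T (op_prod S (map X [0..<n]))) (ptrace S T (op_prod S (map Y [0..<n])))"
proof -
  have "op_eq S (op_mult S (op_prod S (map X [0..<n])) (G n)) (op_mult S (G 0) (op_prod S (map Y [0..<n])))"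
    by (rule op_prod_telescope[OF S]) (rule step)
  then show ?thesis
    using G0 Gn by (intro ptrace_similar[OF S T inv]) simp
qed

section \<open>Relabelling slots\<close>

definition relabel :: "('s \<Rightarrow> 's) \<Rightarrow> 's set \<Rightarrow> ('s, 'b) sop \<Rightarrow> ('s, 'b) sop" where
  "relabel f T P = (\<lambda>x y. P (restrict (x \<circ> f) T) (restrict (y \<circ> f) T))"

lemma relabel_cong: "op_eq T P Q \<Longrightarrow> op_eq (f ` T) (relabel f T P) (relabel f T Q)"
  by (auto simp: op_eq_def relabel_def)

lemma bij_betw_relabel_cfg:
  assumes "inj_on f T"
  shows "bij_betw (\<lambda>w. restrict (w \<circ> f) T) (cfg (f ` T)) (cfg T)"
proof (rule bij_betw_byWitness[where f' = "\<lambda>z. restrict (z \<circ> the_inv_into T f) (f ` T)"])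
  show "\<forall>w\<in>cfg (f ` T). restrict (restrict (w \<circ> f) T \<circ> the_inv_into T f) (f ` T) = w"
    using assms by (auto simp: mem_cfg_iff fun_eq_iff the_inv_into_f_f f_the_inv_into_f the_inv_into_into)
  show "\<forall>z\<in>cfg T. restrict (restrict (z \<circ> the_inv_into T f) (f ` T) \<circ> f) T = z"
    using assms by (auto simp: mem_cfg_iff fun_eq_iff the_inv_into_f_f)
qed auto

lemma relabel_mult:
  fixes P :: "('s, 'b::finite) sop"
  assumes "inj_on f T"
  shows "op_eq (f ` T) (relabel f T (op_mult T P Q)) (op_mult (f ` T) (relabel f T P) (relabel f T Q))"
  by (simp add: op_eq_def relabel_def op_mult_def sum.reindex_bij_betw[OF bij_betw_relabel_cfg[OF assms], symmetric])

lemma relabel_id: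
  assumes "inj_on f T"
  shows "op_eq (f ` T) (relabel f T (op_id T)) (op_id (f ` T) :: ('s, 'b) sop)"
  using bij_betw_imp_inj_on[OF bij_betw_relabel_cfg[OF assms]]
  by (auto simp: op_eq_def relabel_def op_id_def inj_on_def)

lemma relabel_prod:
  fixes Ps :: "('s, 'b::finite) sop list"
  assumes "inj_on f T"
  shows "op_eq (f ` T) (relabel f T (op_prod T Ps)) (op_prod (f ` T) (map (relabel f T) Ps))"
proof (induction Ps)
  case Nil
  then show ?case
    by (simp add: relabel_id assms)
next
  case (Cons P Ps)
  have "op_eq (f ` T) (relabel f T (op_prod T (P # Ps))) (op_mult (f ` T) (relabel f T P) (relabel f T (op_prod T Ps)))"
    unfolding op_prod_Cons by (rule relabel_mult[OF assms])
  also have "op_eq (f ` T) \<dots> (op_prod (f ` T) (map (relabel f T) (P # Ps)))"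
    using Cons by (simp add: op_mult_cong)
  finally show ?case .
qed

lemma relabel_embed:
  fixes X :: "('s, 'b) sop"
  assumes "inj_on f S" "U \<subseteq> S"
  shows "relabel f S (embed S U X) = embed (f ` S) (f ` U) (relabel f U X)"
proof (intro ext)
  fix x y :: "'s \<Rightarrow> 'b"
  have "restrict (restrict (x \<circ> f) S) U = restrict (restrict x (f ` U) \<circ> f) U" for x :: "'s \<Rightarrow> 'b"
    using assms by (auto simp: fun_eq_iff)
  moreover have "f ` S - f ` U = f ` (S - U)"
    using assms inj_on_image_set_diff by blast
  ultimately show "relabel f S (embed S U X) x y = embed (f ` S) (f ` U) (relabel f U X) x y"
    by (simp add: relabel_def embed_def)
qed

lemma relabel_op3_on:
  assumes "s1 \<in> T" "s2 \<in> T" "s3 \<in> T"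
  shows "relabel f T (op3_on (s1, s2, s3) X) = op3_on (f s1, f s2, f s3) X"
  using assms by (simp add: relabel_def op3_on_def)

lemma relabel_ptrace:
  fixes X :: "('s, 'b::finite) sop"
  assumes inj: "inj_on f S" and T: "T \<subseteq> S"
  shows "op_eq (f ` S - f ` T) (relabel f (S - T) (ptrace S T X)) (ptrace (f ` S) (f ` T) (relabel f S X))"
  unfolding op_eq_def
proof (intro ballI)
  fix x y :: "'s \<Rightarrow> 'b"
  have "inj_on f T"
    using inj T inj_on_subset by blast
  moreover have "restrict (override_on x w (f ` T) \<circ> f) S
      = override_on (restrict (x \<circ> f) (S - T)) (restrict (w \<circ> f) T) T" for x w :: "'s \<Rightarrow> 'b"
    using inj T by (auto simp: override_on_def fun_eq_iff inj_on_image_mem_iff)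
  ultimately show "relabel f (S - T) (ptrace S T X) x y = ptrace (f ` S) (f ` T) (relabel f S X) x y"
    by (simp add: relabel_def ptrace_override sum.reindex_bij_betw[OF bij_betw_relabel_cfg, symmetric])
qed

lemma relabel_fixed:
  fixes P :: "('s, 'b) sop"
  assumes "\<And>s. s \<in> W \<Longrightarrow> f s = s"
  shows "op_eq W (relabel f W P) P"
proof -
  have "restrict (x \<circ> f) W = x" if "x \<in> cfg W" for x :: "'s \<Rightarrow> 'b"
    using that assms by (auto simp: mem_cfg_iff fun_eq_iff)
  then show ?thesis
    by (simp add: op_eq_def relabel_def)
qed

section \<open>Local operators and the tetrahedron equation\<close>

text \<open>Colours are kept as symbolic sums: the simplifier would otherwise rewrite \<open>\<sigma> + of_nat l\<close> into case
  distinctions on the parity of \<open>l\<close>.\<close>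

declare add_bit_eq_xor [simp del]

lemma bit_add_one_of_nat_Suc: "(\<tau> :: bit) + 1 + of_nat (Suc l) = \<tau> + of_nat l"
proof -
  have "(\<tau> :: bit) + 1 + of_nat (Suc l) = \<tau> + of_nat l + (1 + 1)"
    by (simp only: of_nat_Suc ac_simps)
  then show ?thesis
    by (simp only: one_add_one bit_2_eq_0 add_0_right)
qed

lemma loc_embed:
  "{(a, b), (a, c), (b, c)} \<subseteq> T \<Longrightarrow> T \<subseteq> S \<Longrightarrow> embed S T (loc T X \<sigma> a b c ra rb rc) = loc S X \<sigma> a b c ra rb rc"
  unfolding loc_def by (rule embed_embed)

lemma acts_on_loc:
  "{(a, b), (a, c), (b, c)} \<subseteq> S \<Longrightarrow> acts_on S {(a, b), (a, c), (b, c)} (loc S X \<sigma> a b c ra rb rc)"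
  unfolding loc_def by (rule acts_on_embed)

lemma relabel_loc:
  assumes "inj_on (map_prod g g) S" "{(a, b), (a, c), (b, c)} \<subseteq> S"
  shows "relabel (map_prod g g) S (loc S X \<sigma> a b c ra rb rc)
       = loc (map_prod g g ` S) X \<sigma> (g a) (g b) (g c) ra rb rc"
  using assms by (simp add: loc_def relabel_embed relabel_op3_on)

lemma S6_eq: "S6 = {(E 1, E 2), (E 1, E 3), (E 1, E 4), (E 2, E 3), (E 2, E 4), (E 3, E 4)}"
proof -
  have "(i = 1 \<and> j = 2) \<or> (i = 1 \<and> j = 3) \<or> (i = 1 \<and> j = 4) \<or> (i = 2 \<and> j = 3) \<or> (i = 2 \<and> j = 4) \<or> (i = 3 \<and> j = 4)"
    if "1 \<le> i" "i < j" "j \<le> (4::nat)" for i j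
    using that by presburger
  then show ?thesis
    unfolding S6_def by auto
qed

lemma BTE_relabel:
  fixes R R1 R2 R3 :: "('c, 'b::finite) Rfam"
  assumes bte: "BTE R R1 R2 R3 \<sigma>"
    and d: "p1 \<noteq> p2" "p1 \<noteq> p3" "p1 \<noteq> p4" "p2 \<noteq> p3" "p2 \<noteq> p4" "p3 \<noteq> p4"
    and T: "T = {(p1, p2), (p1, p3), (p1, p4), (p2, p3), (p2, p4), (p3, p4)}"
  shows "op_eq T
       (op_prod T [loc T R \<sigma> p1 p2 p3 r1 r2 r3, loc T R1 (\<sigma> + 1) p1 p2 p4 r1 r2 r4,
                   loc T R2 \<sigma> p1 p3 p4 r1 r3 r4, loc T R3 (\<sigma> + 1) p2 p3 p4 r2 r3 r4])
       (op_prod T [loc T R3 \<sigma> p2 p3 p4 r2 r3 r4, loc T R2 (\<sigma> + 1) p1 p3 p4 r1 r3 r4,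
                   loc T R1 \<sigma> p1 p2 p4 r1 r2 r4, loc T R (\<sigma> + 1) p1 p2 p3 r1 r2 r3])"
proof -
  define g where "g p = (if p = E 1 then p1 else if p = E 2 then p2 else if p = E 3 then p3 else p4)" for p
  let ?f = "map_prod g g"
  have g: "g (E 1) = p1" "g (E (Suc 0)) = p1" "g (E 2) = p2" "g (E 3) = p3" "g (E 4) = p4"
    by (simp_all add: g_def)
  have img: "?f ` S6 = T"
    by (simp add: S6_eq g T)
  have inj: "inj_on ?f S6"
    unfolding S6_eq inj_on_def using d by (auto simp: g)
  have rl: "relabel ?f S6 (loc S6 X c a b e x y z) = loc T X c (g a) (g b) (g e) x y z"
    if "{(a, b), (a, e), (b, e)} \<subseteq> S6" for X :: "('c, 'b) Rfam" and c a b e x y z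
    using relabel_loc[OF inj that] img by simp
  have tri: "{(E 1, E 2), (E 1, E 3), (E 2, E 3)} \<subseteq> S6" "{(E 1, E 2), (E 1, E 4), (E 2, E 4)} \<subseteq> S6"
    "{(E 1, E 3), (E 1, E 4), (E 3, E 4)} \<subseteq> S6" "{(E 2, E 3), (E 2, E 4), (E 3, E 4)} \<subseteq> S6"
    by (auto simp: S6_eq)
  show ?thesis
    using op_eq_trans[OF op_eq_sym[OF relabel_prod[OF inj]]
        op_eq_trans[OF relabel_cong[OF bte[unfolded BTE_def, rule_format]] relabel_prod[OF inj]]]
    by (simp only: list.map rl[OF tri(1)] rl[OF tri(2)] rl[OF tri(3)] rl[OF tri(4)] g img)
qed

lemma BTE_at:
  fixes R R1 R2 R3 :: "('c, 'b::finite) Rfam"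
  assumes bte: "BTE R R1 R2 R3 \<sigma>" and S: "finite S"
    and d: "p1 \<noteq> p2" "p1 \<noteq> p3" "p1 \<noteq> p4" "p2 \<noteq> p3" "p2 \<noteq> p4" "p3 \<noteq> p4"
    and sub: "{(p1, p2), (p1, p3), (p1, p4), (p2, p3), (p2, p4), (p3, p4)} \<subseteq> S"
  shows "op_eq S
       (op_mult S (op_mult S (loc S R \<sigma> p1 p2 p3 r1 r2 r3)
          (op_mult S (loc S R1 (\<sigma> + 1) p1 p2 p4 r1 r2 r4) (loc S R2 \<sigma> p1 p3 p4 r1 r3 r4)))
        (loc S R3 (\<sigma> + 1) p2 p3 p4 r2 r3 r4))
       (op_mult S (loc S R3 \<sigma> p2 p3 p4 r2 r3 r4)
          (op_mult S (loc S R2 (\<sigma> + 1) p1 p3 p4 r1 r3 r4)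
             (op_mult S (loc S R1 \<sigma> p1 p2 p4 r1 r2 r4) (loc S R (\<sigma> + 1) p1 p2 p3 r1 r2 r3))))"
proof -
  let ?T = "{(p1, p2), (p1, p3), (p1, p4), (p2, p3), (p2, p4), (p3, p4)}"
  from embed_cong[OF BTE_relabel[OF bte d refl], of S]
  have "op_eq S (op_prod S (map (embed S ?T) [loc ?T R \<sigma> p1 p2 p3 r1 r2 r3, loc ?T R1 (\<sigma> + 1) p1 p2 p4 r1 r2 r4,
                    loc ?T R2 \<sigma> p1 p3 p4 r1 r3 r4, loc ?T R3 (\<sigma> + 1) p2 p3 p4 r2 r3 r4]))
       (op_prod S (map (embed S ?T) [loc ?T R3 \<sigma> p2 p3 p4 r2 r3 r4, loc ?T R2 (\<sigma> + 1) p1 p3 p4 r1 r3 r4,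
                    loc ?T R1 \<sigma> p1 p2 p4 r1 r2 r4, loc ?T R (\<sigma> + 1) p1 p2 p3 r1 r2 r3]))"
    using op_eq_trans[OF op_eq_sym[OF embed_prod[OF S sub]] op_eq_trans[OF _ embed_prod[OF S sub]]] by blast
  moreover have "{(p1, p2), (p1, p3), (p2, p3)} \<subseteq> ?T" "{(p1, p2), (p1, p4), (p2, p4)} \<subseteq> ?T"
    "{(p1, p3), (p1, p4), (p3, p4)} \<subseteq> ?T" "{(p2, p3), (p2, p4), (p3, p4)} \<subseteq> ?T"
    by auto
  ultimately show ?thesis
    using op_eq_trans[OF op_eq_sym[OF op_prod_4(2)[OF S]] op_eq_trans[OF _ op_prod_4(1)[OF S]]]
    by (simp only: list.map loc_embed[OF _ sub])
qed

lemma bij_betw_op3_cfg: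
  assumes "s1 \<noteq> s2" "s1 \<noteq> s3" "s2 \<noteq> s3"
  shows "bij_betw (\<lambda>z. (z s1, z s2, z s3)) (cfg {s1, s2, s3}) (UNIV :: ('b \<times> 'b \<times> 'b) set)"
  by (rule bij_betw_byWitness[where f' = "\<lambda>(u, v, w) s. if s = s1 then u else if s = s2 then v else if s = s3 then w else undefined"])
    (use assms in \<open>auto simp: mem_cfg_iff fun_eq_iff\<close>)

lemma op_invertible_op3_on:
  fixes M :: "'b::finite op3" and s1 s2 s3 :: 's
  assumes d: "s1 \<noteq> s2" "s1 \<noteq> s3" "s2 \<noteq> s3" and inv: "invertible3 M"
  shows "op_invertible {s1, s2, s3} (op3_on (s1, s2, s3) M)"
proof -
  obtain N where MN: "\<And>x y. (\<Sum>z\<in>UNIV. M x z * N z y) = (if x = y then 1 else 0)"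
    and NM: "\<And>x y. (\<Sum>z\<in>UNIV. N x z * M z y) = (if x = y then 1 else 0)"
    using inv unfolding invertible3_def by blast
  have mult: "op_mult {s1, s2, s3} (op3_on (s1, s2, s3) P) (op3_on (s1, s2, s3) Q) x y
      = (\<Sum>p\<in>UNIV. P (x s1, x s2, x s3) p * Q p (y s1, y s2, y s3))" for P Q :: "'b op3" and x y
    using sum.reindex_bij_betw[OF bij_betw_op3_cfg[OF d]] by (simp add: op_mult_def op3_on_def)
  have eq: "x s1 = y s1 \<and> x s2 = y s2 \<and> x s3 = y s3 \<longleftrightarrow> x = y"
    if "x \<in> cfg {s1, s2, s3}" "y \<in> cfg {s1, s2, s3}" for x y :: "'s \<Rightarrow> 'b"
  proof
    assume agree: "x s1 = y s1 \<and> x s2 = y s2 \<and> x s3 = y s3"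
    show "x = y"
    proof
      fix s
      show "x s = y s"
        using agree that by (cases "s = s1 \<or> s = s2 \<or> s = s3") (auto simp: mem_cfg_iff)
    qed
  qed simp
  show ?thesis
    unfolding op_invertible_def op_eq_def
    by (intro exI[of _ "op3_on (s1, s2, s3) N"]) (simp add: mult MN NM op_id_def eq)
qed

section \<open>Trace reductions\<close>

definition loc_chain :: "slot set \<Rightarrow> ('c, 'b::finite) Rfam \<Rightarrow> nat \<Rightarrow> (nat \<Rightarrow> 'c) \<Rightarrow> bit
    \<Rightarrow> plane \<Rightarrow> plane \<Rightarrow> 'c \<Rightarrow> 'c \<Rightarrow> (slot, 'b) sop" where
  "loc_chain S X L rA \<sigma> \<alpha> \<beta> ra rb =
     op_prod S (map (\<lambda>l. loc S X (\<sigma> + of_nat (l + 1)) (A l) \<alpha> \<beta> (rA l) ra rb) [0..<2 * L])"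

lemma boldR_eq_ptrace_loc_chain:
  "boldR X L rA \<sigma> \<alpha> \<beta> ra rb = ptrace (insert (\<alpha>, \<beta>) (Rsl L \<alpha> \<beta>)) {(\<alpha>, \<beta>)}
     (loc_chain (insert (\<alpha>, \<beta>) (Rsl L \<alpha> \<beta>)) X L rA \<sigma> \<alpha> \<beta> ra rb)"
  by (simp only: boldR_def loc_chain_def Let_def Un_insert_right Un_empty_right)

lemma mem_Rsl: "s \<in> Rsl L \<alpha> \<beta> \<longleftrightarrow> (\<exists>l<2 * L. s = (A l, \<alpha>) \<or> s = (A l, \<beta>))"
  by (auto simp: Rsl_def)

lemma Rsl_eq_image: "Rsl L \<alpha> \<beta> = (\<lambda>l. (A l, \<alpha>)) ` {..<2 * L} \<union> (\<lambda>l. (A l, \<beta>)) ` {..<2 * L}"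
  by (auto simp: Rsl_def)

lemma finite_Rsl [simp]: "finite (Rsl L \<alpha> \<beta>)"
  by (simp add: Rsl_eq_image)

lemma map_prod_image_Rsl:
  "(\<And>l. g (A l) = A l) \<Longrightarrow> map_prod g g ` Rsl L \<alpha> \<beta> = Rsl L (g \<alpha>) (g \<beta>)"
  by (simp add: Rsl_eq_image image_Un image_image)

lemma pair_notin_Rsl: "a \<notin> range A \<Longrightarrow> (a, b) \<notin> Rsl L \<alpha> \<beta>"
  by (auto simp: Rsl_def)

lemma loc_chain_slots: "l < 2 * L \<Longrightarrow> {(A l, \<alpha>), (A l, \<beta>), (\<alpha>, \<beta>)} \<subseteq> insert (\<alpha>, \<beta>) (Rsl L \<alpha> \<beta>)"
  by (auto simp: mem_Rsl)

lemma ptrace_loc_chain: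
  fixes X :: "('c, 'b::finite) Rfam"
  assumes S: "finite S" and \<alpha>: "\<alpha> \<notin> range A" and V: "insert (\<alpha>, \<beta>) (Rsl L \<alpha> \<beta>) \<subseteq> S"
    and S': "Rsl L \<alpha> \<beta> \<subseteq> S'" "S' \<subseteq> S - {(\<alpha>, \<beta>)}"
  shows "op_eq S' (ptrace S {(\<alpha>, \<beta>)} (loc_chain S X L rA \<sigma> \<alpha> \<beta> ra rb))
           (embed S' (Rsl L \<alpha> \<beta>) (boldR X L rA \<sigma> \<alpha> \<beta> ra rb))"
proof -
  let ?V = "insert (\<alpha>, \<beta>) (Rsl L \<alpha> \<beta>)"
  have V_minus: "?V - {(\<alpha>, \<beta>)} = Rsl L \<alpha> \<beta>"
    using pair_notin_Rsl[OF \<alpha>] by auto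
  let ?U = "\<lambda>l. {(A l, \<alpha>), (A l, \<beta>), (\<alpha>, \<beta>)}"
  let ?Z = "\<lambda>l. op3_on ((A l, \<alpha>), (A l, \<beta>), (\<alpha>, \<beta>)) (X (\<sigma> + of_nat (l + 1)) (rA l) ra rb)"
  have "op_eq (S - {(\<alpha>, \<beta>)}) (ptrace S {(\<alpha>, \<beta>)} (op_prod S (map (\<lambda>l. embed S (?U l) (?Z l)) [0..<2 * L])))
      (embed (S - {(\<alpha>, \<beta>)}) (?V - {(\<alpha>, \<beta>)}) (ptrace ?V {(\<alpha>, \<beta>)} (op_prod ?V (map (\<lambda>l. embed ?V (?U l) (?Z l)) [0..<2 * L]))))"
    by (rule ptrace_prod_embed[OF S V]) (use loc_chain_slots in auto)
  then have "op_eq (S - {(\<alpha>, \<beta>)}) (ptrace S {(\<alpha>, \<beta>)} (loc_chain S X L rA \<sigma> \<alpha> \<beta> ra rb))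
      (embed (S - {(\<alpha>, \<beta>)}) (Rsl L \<alpha> \<beta>) (boldR X L rA \<sigma> \<alpha> \<beta> ra rb))"
    unfolding boldR_eq_ptrace_loc_chain loc_chain_def loc_def V_minus .
  then show ?thesis
    using op_eq_trans[OF op_eq_subset[OF _ S'(2)] embed_subset[OF S']] by blast
qed

lemma acts_on_loc_chain:
  fixes X :: "('c, 'b::finite) Rfam"
  assumes "finite S" "insert (\<alpha>, \<beta>) (Rsl L \<alpha> \<beta>) \<subseteq> S"
  shows "acts_on S (insert (\<alpha>, \<beta>) (Rsl L \<alpha> \<beta>)) (loc_chain S X L rA \<sigma> \<alpha> \<beta> ra rb)"
  unfolding loc_chain_def
proof (rule acts_on_prod[OF assms])
  fix P assume "P \<in> set (map (\<lambda>l. loc S X (\<sigma> + of_nat (l + 1)) (A l) \<alpha> \<beta> (rA l) ra rb) [0..<2 * L])"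
  then obtain l where l: "l < 2 * L" and P: "P = loc S X (\<sigma> + of_nat (l + 1)) (A l) \<alpha> \<beta> (rA l) ra rb"
    by auto
  have "{(A l, \<alpha>), (A l, \<beta>), (\<alpha>, \<beta>)} \<subseteq> S"
    using loc_chain_slots[OF l] assms(2) by blast
  then show "acts_on S (insert (\<alpha>, \<beta>) (Rsl L \<alpha> \<beta>)) P"
    unfolding P by (rule acts_on_mono[OF acts_on_loc loc_chain_slots[OF l] assms(2)])
qed

lemma loc_commutes:
  fixes X :: "('c, 'b::finite) Rfam"
  assumes "finite S" "{(a, b), (a, c), (b, c)} \<subseteq> S" "{(a', b'), (a', c'), (b', c')} \<subseteq> S"
    "{(a, b), (a, c), (b, c)} \<inter> {(a', b'), (a', c'), (b', c')} = {}"
  shows "commutes S (loc S X \<sigma> a b c ra rb rc) (loc S Y \<sigma>' a' b' c' ra' rb' rc')"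
  using acts_on_disjoint_commutes[OF assms(1) acts_on_loc[OF assms(2)] acts_on_loc[OF assms(3)] assms(4)] .

lemma loc_chain_factors_commute:
  fixes X Y :: "('c, 'b::finite) Rfam"
  assumes S: "finite S" and planes: "a \<notin> range A" "a' \<notin> range A" and pairs: "(a, b) \<noteq> (a', b')"
    and ij: "i \<noteq> j" "i < 2 * L" "j < 2 * L"
    and V: "insert (a, b) (Rsl L a b) \<subseteq> S" "insert (a', b') (Rsl L a' b') \<subseteq> S"
  shows "commutes S (loc S X c (A i) a b (rA i) x y) (loc S Y c' (A j) a' b' (rA j) x' y')"
proof (rule loc_commutes[OF S])
  show "{(A i, a), (A i, b), (a, b)} \<subseteq> S" "{(A j, a'), (A j, b'), (a', b')} \<subseteq> S"
    using subset_trans[OF loc_chain_slots[OF ij(2)] V(1)] subset_trans[OF loc_chain_slots[OF ij(3)] V(2)] .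
  show "{(A i, a), (A i, b), (a, b)} \<inter> {(A j, a'), (A j, b'), (a', b')} = {}"
    using planes pairs ij(1) by auto
qed

lemma loc_chain_triple_distrib:
  fixes X1 X2 X3 :: "('c, 'b::finite) Rfam"
  assumes S: "finite S" and planes: "a1 \<notin> range A" "a2 \<notin> range A" "a3 \<notin> range A"
    and pairs: "distinct [(a1, b1), (a2, b2), (a3, b3)]"
    and V: "insert (a1, b1) (Rsl L a1 b1) \<subseteq> S" "insert (a2, b2) (Rsl L a2 b2) \<subseteq> S"
      "insert (a3, b3) (Rsl L a3 b3) \<subseteq> S"
  shows "op_eq S
     (op_prod S (map (\<lambda>l. op_mult S (loc S X1 (\<sigma>1 + of_nat (l + 1)) (A l) a1 b1 (rA l) x1 y1)
          (op_mult S (loc S X2 (\<sigma>2 + of_nat (l + 1)) (A l) a2 b2 (rA l) x2 y2)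
                     (loc S X3 (\<sigma>3 + of_nat (l + 1)) (A l) a3 b3 (rA l) x3 y3))) [0..<2 * L]))
     (op_mult S (loc_chain S X1 L rA \<sigma>1 a1 b1 x1 y1)
        (op_mult S (loc_chain S X2 L rA \<sigma>2 a2 b2 x2 y2) (loc_chain S X3 L rA \<sigma>3 a3 b3 x3 y3)))"
proof -
  let ?L1 = "\<lambda>l. loc S X1 (\<sigma>1 + of_nat (l + 1)) (A l) a1 b1 (rA l) x1 y1"
  let ?L2 = "\<lambda>l. loc S X2 (\<sigma>2 + of_nat (l + 1)) (A l) a2 b2 (rA l) x2 y2"
  let ?L3 = "\<lambda>l. loc S X3 (\<sigma>3 + of_nat (l + 1)) (A l) a3 b3 (rA l) x3 y3"
  have comm: "commutes S (?L1 j) (?L2 i)" "commutes S (?L1 j) (?L3 i)" "commutes S (?L3 i) (?L2 j)"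
    if "i < j" "j < 2 * L" for i j
  proof -
    have ij: "i \<noteq> j" "j \<noteq> i" "i < 2 * L"
      using that by auto
    have d: "(a1, b1) \<noteq> (a2, b2)" "(a1, b1) \<noteq> (a3, b3)" "(a3, b3) \<noteq> (a2, b2)"
      using pairs by auto
    show "commutes S (?L1 j) (?L2 i)" "commutes S (?L1 j) (?L3 i)" "commutes S (?L3 i) (?L2 j)"
      using loc_chain_factors_commute[OF S planes(1) planes(2) d(1) ij(2) that(2) ij(3) V(1) V(2)]
        loc_chain_factors_commute[OF S planes(1) planes(3) d(2) ij(2) that(2) ij(3) V(1) V(3)]
        loc_chain_factors_commute[OF S planes(3) planes(2) d(3) ij(1) ij(3) that(2) V(3) V(2)]
      by this+
  qed
  have "op_eq S (op_prod S (map (\<lambda>l. op_mult S (?L1 l) (op_mult S (?L2 l) (?L3 l))) [0..<2 * L]))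
      (op_mult S (loc_chain S X1 L rA \<sigma>1 a1 b1 x1 y1) (op_prod S (map (\<lambda>l. op_mult S (?L2 l) (?L3 l)) [0..<2 * L])))"
    unfolding loc_chain_def
    by (rule op_prod_mult_distrib[OF S, where P = ?L1 and Q = "\<lambda>l. op_mult S (?L2 l) (?L3 l)"])
      (rule commutes_sym[OF commutes_mult[OF S comm(1,2)]])
  also have "op_eq S \<dots> (op_mult S (loc_chain S X1 L rA \<sigma>1 a1 b1 x1 y1)
      (op_mult S (loc_chain S X2 L rA \<sigma>2 a2 b2 x2 y2) (loc_chain S X3 L rA \<sigma>3 a3 b3 x3 y3)))"
    unfolding loc_chain_def
    by (rule op_mult_cong[OF op_eq_refl op_prod_mult_distrib[OF S, where P = ?L2 and Q = ?L3]]) (rule comm)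
  finally show ?thesis .
qed

lemma ptrace_loc_chain_triple:
  fixes X1 X2 X3 :: "('c, 'b::finite) Rfam"
  assumes S: "finite S" and planes: "a1 \<notin> range A" "a2 \<notin> range A" "a3 \<notin> range A"
    and pairs: "distinct [(a1, b1), (a2, b2), (a3, b3)]"
    and V: "insert (a1, b1) (Rsl L a1 b1) \<subseteq> S" "insert (a2, b2) (Rsl L a2 b2) \<subseteq> S"
      "insert (a3, b3) (Rsl L a3 b3) \<subseteq> S"
  shows "op_eq (S - {(a1, b1), (a2, b2), (a3, b3)})
     (ptrace S {(a1, b1), (a2, b2), (a3, b3)}
       (op_prod S (map (\<lambda>l. op_mult S (loc S X1 (\<sigma>1 + of_nat (l + 1)) (A l) a1 b1 (rA l) x1 y1)
          (op_mult S (loc S X2 (\<sigma>2 + of_nat (l + 1)) (A l) a2 b2 (rA l) x2 y2)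
                     (loc S X3 (\<sigma>3 + of_nat (l + 1)) (A l) a3 b3 (rA l) x3 y3))) [0..<2 * L])))
     (op_mult (S - {(a1, b1), (a2, b2), (a3, b3)})
        (embed (S - {(a1, b1), (a2, b2), (a3, b3)}) (Rsl L a1 b1) (boldR X1 L rA \<sigma>1 a1 b1 x1 y1))
        (op_mult (S - {(a1, b1), (a2, b2), (a3, b3)})
           (embed (S - {(a1, b1), (a2, b2), (a3, b3)}) (Rsl L a2 b2) (boldR X2 L rA \<sigma>2 a2 b2 x2 y2))
           (embed (S - {(a1, b1), (a2, b2), (a3, b3)}) (Rsl L a3 b3) (boldR X3 L rA \<sigma>3 a3 b3 x3 y3))))"
proof -
  let ?T = "{(a1, b1), (a2, b2), (a3, b3)}"
  let ?C1 = "loc_chain S X1 L rA \<sigma>1 a1 b1 x1 y1"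
  let ?C2 = "loc_chain S X2 L rA \<sigma>2 a2 b2 x2 y2"
  let ?C3 = "loc_chain S X3 L rA \<sigma>3 a3 b3 x3 y3"
  have notin: "(a1, b1) \<notin> Rsl L a b" "(a2, b2) \<notin> Rsl L a b" "(a3, b3) \<notin> Rsl L a b" for a b
    using pair_notin_Rsl planes by blast+
  have "op_eq (S - ?T) (ptrace S ?T (op_prod S (map (\<lambda>l. op_mult S (loc S X1 (\<sigma>1 + of_nat (l + 1)) (A l) a1 b1 (rA l) x1 y1)
          (op_mult S (loc S X2 (\<sigma>2 + of_nat (l + 1)) (A l) a2 b2 (rA l) x2 y2)
                     (loc S X3 (\<sigma>3 + of_nat (l + 1)) (A l) a3 b3 (rA l) x3 y3))) [0..<2 * L])))
      (ptrace S ?T (op_mult S ?C1 (op_mult S ?C2 ?C3)))"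
    using V by (intro ptrace_cong loc_chain_triple_distrib[OF S planes pairs V]) auto
  also have "op_eq (S - ?T) \<dots> (op_mult (S - ?T) (ptrace S {(a1, b1)} ?C1)
      (op_mult (S - ?T) (ptrace S {(a2, b2)} ?C2) (ptrace S {(a3, b3)} ?C3)))"
  proof -
    have "op_eq (S - ({(a1, b1)} \<union> ({(a2, b2)} \<union> {(a3, b3)})))
        (ptrace S ({(a1, b1)} \<union> ({(a2, b2)} \<union> {(a3, b3)})) (op_mult S ?C1 (op_mult S ?C2 ?C3)))
        (op_mult (S - ({(a1, b1)} \<union> ({(a2, b2)} \<union> {(a3, b3)}))) (ptrace S {(a1, b1)} ?C1)
          (op_mult (S - ({(a1, b1)} \<union> ({(a2, b2)} \<union> {(a3, b3)}))) (ptrace S {(a2, b2)} ?C2) (ptrace S {(a3, b3)} ?C3)))"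
      by (rule ptrace_mult3_disjoint[OF S acts_on_loc_chain[OF S V(1)] acts_on_loc_chain[OF S V(2)] acts_on_loc_chain[OF S V(3)]])
        (use pairs notin in auto)
    then show ?thesis
      by (simp only: Un_insert_left Un_empty_left)
  qed
  also have "op_eq (S - ?T) \<dots> (op_mult (S - ?T) (embed (S - ?T) (Rsl L a1 b1) (boldR X1 L rA \<sigma>1 a1 b1 x1 y1))
        (op_mult (S - ?T) (embed (S - ?T) (Rsl L a2 b2) (boldR X2 L rA \<sigma>2 a2 b2 x2 y2))
           (embed (S - ?T) (Rsl L a3 b3) (boldR X3 L rA \<sigma>3 a3 b3 x3 y3))))"
    using notin pairs V by (intro op_mult_cong ptrace_loc_chain[OF S] planes) auto
  finally show ?thesis .
qed

text \<open>The \<open>l\<close>-th tetrahedron equation along the planes \<open>1\<^sub>l\<close> is taken with colour \<open>\<tau> + l\<close>, so that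
  consecutive ones share their intertwiner \<open>R3\<close>.\<close>

lemma BTE_chain_step:
  fixes R R1 R2 R3 :: "('c, 'b::finite) Rfam"
  assumes bte: "\<And>\<sigma>. BTE R R1 R2 R3 \<sigma>" and S: "finite S"
    and planes: "a \<notin> range A" "b \<notin> range A" "c \<notin> range A" "a \<noteq> b" "a \<noteq> c" "b \<noteq> c"
    and l: "l < 2 * L"
    and sub: "Rsl L a b \<subseteq> S" "Rsl L a c \<subseteq> S" "{(a, b), (a, c), (b, c)} \<subseteq> S"
  shows "op_eq S
    (op_mult S (op_mult S (loc S R (\<tau> + 1 + of_nat (l + 1)) (A l) a b (rA l) ra rb)
       (op_mult S (loc S R1 (\<tau> + of_nat (l + 1)) (A l) a c (rA l) ra rc)
                  (loc S R2 (\<tau> + 1 + of_nat (l + 1)) (A l) b c (rA l) rb rc)))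
     (loc S R3 (\<tau> + of_nat (Suc l)) a b c ra rb rc))
    (op_mult S (loc S R3 (\<tau> + of_nat l) a b c ra rb rc)
       (op_mult S (loc S R2 (\<tau> + of_nat (l + 1)) (A l) b c (rA l) rb rc)
          (op_mult S (loc S R1 (\<tau> + 1 + of_nat (l + 1)) (A l) a c (rA l) ra rc)
                     (loc S R (\<tau> + of_nat (l + 1)) (A l) a b (rA l) ra rb))))"
proof -
  let ?\<sigma> = "\<tau> + 1 + of_nat (l + 1)"
  have e0: "\<tau> + of_nat l = ?\<sigma>" and e1: "?\<sigma> + 1 = \<tau> + of_nat (Suc l)"
    using bit_add_one_of_nat_Suc[of \<tau> l] by (simp_all add: ac_simps)
  have "(A l, a) \<in> Rsl L a b" "(A l, b) \<in> Rsl L a b" "(A l, c) \<in> Rsl L a c"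
    using l by (auto simp: mem_Rsl)
  then have "{(A l, a), (A l, b), (A l, c), (a, b), (a, c), (b, c)} \<subseteq> S"
    using sub by auto
  moreover have "A l \<noteq> a" "A l \<noteq> b" "A l \<noteq> c"
    using planes by auto
  ultimately show ?thesis
    using planes(4-6) unfolding e0 Suc_eq_plus1 e1[unfolded Suc_eq_plus1, symmetric] by (intro BTE_at[OF bte S])
qed

lemma bold_YBE:
  fixes R R1 R2 R3 :: "('c, 'b::finite) Rfam"
  assumes bte: "\<And>\<sigma>. BTE R R1 R2 R3 \<sigma>" and inv: "\<And>\<sigma> r1 r2 r3. invertible3 (R3 \<sigma> r1 r2 r3)"
    and S: "finite S" and planes: "a \<notin> range A" "b \<notin> range A" "c \<notin> range A" "a \<noteq> b" "a \<noteq> c" "b \<noteq> c"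
    and sub: "Rsl L a b \<subseteq> S" "Rsl L a c \<subseteq> S" "Rsl L b c \<subseteq> S"
    and out: "{(a, b), (a, c), (b, c)} \<inter> S = {}"
  shows "op_eq S
    (op_mult S (embed S (Rsl L a b) (boldR R L rA (\<tau> + 1) a b ra rb))
      (op_mult S (embed S (Rsl L a c) (boldR R1 L rA \<tau> a c ra rc))
                 (embed S (Rsl L b c) (boldR R2 L rA (\<tau> + 1) b c rb rc))))
    (op_mult S (embed S (Rsl L b c) (boldR R2 L rA \<tau> b c rb rc))
      (op_mult S (embed S (Rsl L a c) (boldR R1 L rA (\<tau> + 1) a c ra rc))
                 (embed S (Rsl L a b) (boldR R L rA \<tau> a b ra rb))))"
proof -
  let ?T = "{(a, b), (a, c), (b, c)}"
  define S' where "S' = S \<union> ?T"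
  have S': "finite S'" "S' - ?T = S"
    using S out by (auto simp: S'_def)
  define G where "G i = loc S' R3 (\<tau> + of_nat i) a b c ra rb rc" for i
  define X where "X l = op_mult S' (loc S' R (\<tau> + 1 + of_nat (l + 1)) (A l) a b (rA l) ra rb)
    (op_mult S' (loc S' R1 (\<tau> + of_nat (l + 1)) (A l) a c (rA l) ra rc)
                (loc S' R2 (\<tau> + 1 + of_nat (l + 1)) (A l) b c (rA l) rb rc))" for l
  define Y where "Y l = op_mult S' (loc S' R2 (\<tau> + of_nat (l + 1)) (A l) b c (rA l) rb rc)
    (op_mult S' (loc S' R1 (\<tau> + 1 + of_nat (l + 1)) (A l) a c (rA l) ra rc)
                (loc S' R (\<tau> + of_nat (l + 1)) (A l) a b (rA l) ra rb))" for l
  have step: "op_eq S' (op_mult S' (X l) (G (Suc l))) (op_mult S' (G l) (Y l))" if "l < 2 * L" for l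
    unfolding X_def Y_def G_def
    by (rule BTE_chain_step[OF bte S'(1) planes that]) (use sub in \<open>auto simp: S'_def\<close>)
  have inv0: "op_invertible ?T (op3_on ((a, b), (a, c), (b, c)) (R3 \<tau> ra rb rc))"
    using planes by (intro op_invertible_op3_on inv) auto
  have G0: "G 0 = embed S' ?T (op3_on ((a, b), (a, c), (b, c)) (R3 \<tau> ra rb rc))"
    by (simp add: G_def loc_def)
  have rail: "op_eq (S' - ?T) (ptrace S' ?T (op_prod S' (map X [0..<2 * L])))
      (ptrace S' ?T (op_prod S' (map Y [0..<2 * L])))"
    by (rule ptrace_prod_intertwined[where X = X and Y = Y and G = G, OF S'(1) _ inv0 G0 _ step])
      (simp_all add: S'_def G_def)
  have lhs: "op_eq (S' - ?T) (ptrace S' ?T (op_prod S' (map X [0..<2 * L])))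
    (op_mult (S' - ?T) (embed (S' - ?T) (Rsl L a b) (boldR R L rA (\<tau> + 1) a b ra rb))
      (op_mult (S' - ?T) (embed (S' - ?T) (Rsl L a c) (boldR R1 L rA \<tau> a c ra rc))
                 (embed (S' - ?T) (Rsl L b c) (boldR R2 L rA (\<tau> + 1) b c rb rc))))"
    unfolding X_def by (rule ptrace_loc_chain_triple[OF S'(1)]) (use planes sub in \<open>auto simp: S'_def\<close>)
  have T': "{(b, c), (a, c), (a, b)} = ?T"
    by auto
  have rhs: "op_eq (S' - ?T) (ptrace S' ?T (op_prod S' (map Y [0..<2 * L])))
    (op_mult (S' - ?T) (embed (S' - ?T) (Rsl L b c) (boldR R2 L rA \<tau> b c rb rc))
      (op_mult (S' - ?T) (embed (S' - ?T) (Rsl L a c) (boldR R1 L rA (\<tau> + 1) a c ra rc))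
                 (embed (S' - ?T) (Rsl L a b) (boldR R L rA \<tau> a b ra rb))))"
    unfolding Y_def T'[symmetric] by (rule ptrace_loc_chain_triple[OF S'(1)]) (use planes sub in \<open>auto simp: S'_def\<close>)
  from op_eq_trans[OF op_eq_sym[OF lhs] op_eq_trans[OF rail rhs]] show ?thesis
    unfolding S'(2) .
qed

section \<open>Layer transfer matrices\<close>

definition aux_slots :: "nat \<Rightarrow> plane \<Rightarrow> slot set" where
  "aux_slots L p = {(A l, p) | l. l < 2 * L}"

definition layer_chain :: "slot set \<Rightarrow> ('c, 'b::finite) Rfam \<Rightarrow> nat \<Rightarrow> nat \<Rightarrow> (nat \<Rightarrow> 'c) \<Rightarrow> (nat \<Rightarrow> 'c)
    \<Rightarrow> bit \<Rightarrow> 'c \<Rightarrow> plane \<Rightarrow> (slot, 'b) sop" where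
  "layer_chain S X L M rA rB \<sigma> r p = op_prod S (map (\<lambda>m. embed S (Rsl L (B m) p)
     (boldR X L rA (\<sigma> + of_nat (m + 1)) (B m) p (rB m) r)) [0..<2 * M])"

lemma Tlayer_eq_ptrace_layer_chain:
  "Tlayer X L M rA rB \<sigma> r = ptrace (Wsl L M \<union> aux_slots L (E 0)) (aux_slots L (E 0))
     (layer_chain (Wsl L M \<union> aux_slots L (E 0)) X L M rA rB \<sigma> r (E 0))"
  by (simp only: Tlayer_def layer_chain_def aux_slots_def Let_def)

lemma Rsl_eq_aux_slots: "Rsl L \<alpha> \<beta> = aux_slots L \<alpha> \<union> aux_slots L \<beta>"
  by (auto simp: Rsl_def aux_slots_def)

lemma aux_slots_eq_image: "aux_slots L p = (\<lambda>l. (A l, p)) ` {..<2 * L}"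
  by (auto simp: aux_slots_def)

lemma finite_aux_slots [simp]: "finite (aux_slots L p)"
  by (simp add: aux_slots_eq_image)

lemma finite_Wsl [simp]: "finite (Wsl L M)"
proof -
  have "Wsl L M = (\<lambda>(l, m). (A l, B m)) ` ({..<2 * L} \<times> {..<2 * M})"
    by (auto simp: Wsl_def)
  then show ?thesis
    by simp
qed

lemma Rsl_B_subset_Wsl_aux: "m < 2 * M \<Longrightarrow> Rsl L (B m) p \<subseteq> Wsl L M \<union> aux_slots L p"
  by (auto simp: Rsl_def Wsl_def aux_slots_def)

lemma Wsl_aux_slots_disjoint: "Wsl L M \<inter> aux_slots L (E k) = {}"
  by (auto simp: Wsl_def aux_slots_def)

lemma inj_on_map_prod: "inj g \<Longrightarrow> inj_on (map_prod g g) S"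
  using map_prod_inj_on[of g UNIV g UNIV] by (auto intro: inj_on_subset)

lemma relabel_loc_chain:
  fixes X :: "('c, 'b::finite) Rfam"
  assumes g: "inj g" "\<And>l. g (A l) = A l" and V: "insert (\<alpha>, \<beta>) (Rsl L \<alpha> \<beta>) \<subseteq> S"
  shows "op_eq (map_prod g g ` S) (relabel (map_prod g g) S (loc_chain S X L rA \<sigma> \<alpha> \<beta> ra rb))
           (loc_chain (map_prod g g ` S) X L rA \<sigma> (g \<alpha>) (g \<beta>) ra rb)"
proof -
  let ?f = "map_prod g g"
  let ?L = "\<lambda>l. loc S X (\<sigma> + of_nat (l + 1)) (A l) \<alpha> \<beta> (rA l) ra rb"
  have maps: "map (relabel ?f S) (map ?L [0..<2 * L])
      = map (\<lambda>l. loc (?f ` S) X (\<sigma> + of_nat (l + 1)) (A l) (g \<alpha>) (g \<beta>) (rA l) ra rb) [0..<2 * L]"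
    unfolding map_map
  proof (rule map_cong[OF refl])
    fix l assume "l \<in> set [0..<2 * L]"
    then have "{(A l, \<alpha>), (A l, \<beta>), (\<alpha>, \<beta>)} \<subseteq> S"
      using subset_trans[OF loc_chain_slots V] by simp
    from relabel_loc[OF inj_on_map_prod[OF g(1)] this]
    show "(relabel ?f S \<circ> ?L) l = loc (?f ` S) X (\<sigma> + of_nat (l + 1)) (A l) (g \<alpha>) (g \<beta>) (rA l) ra rb"
      by (simp only: o_apply g(2))
  qed
  show ?thesis
    using relabel_prod[OF inj_on_map_prod[OF g(1)], where T = S and Ps = "map ?L [0..<2 * L]"]
    unfolding loc_chain_def maps .
qed

lemma relabel_boldR:
  fixes X :: "('c, 'b::finite) Rfam"
  assumes g: "inj g" "\<And>l. g (A l) = A l" and \<alpha>: "\<alpha> \<notin> range A"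
  shows "op_eq (Rsl L (g \<alpha>) (g \<beta>)) (relabel (map_prod g g) (Rsl L \<alpha> \<beta>) (boldR X L rA \<sigma> \<alpha> \<beta> ra rb))
           (boldR X L rA \<sigma> (g \<alpha>) (g \<beta>) ra rb)"
proof -
  let ?f = "map_prod g g"
  let ?V = "insert (\<alpha>, \<beta>) (Rsl L \<alpha> \<beta>)" and ?V' = "insert (g \<alpha>, g \<beta>) (Rsl L (g \<alpha>) (g \<beta>))"
  let ?C = "loc_chain ?V X L rA \<sigma> \<alpha> \<beta> ra rb"
  have fV: "?f ` ?V = ?V'"
    using map_prod_image_Rsl[OF g(2)] by simp
  have g\<alpha>: "g \<alpha> \<notin> range A"
    using g \<alpha> by (metis inj_eq rangeE rangeI)
  have minus: "?V - {(\<alpha>, \<beta>)} = Rsl L \<alpha> \<beta>" "?V' - {(g \<alpha>, g \<beta>)} = Rsl L (g \<alpha>) (g \<beta>)"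
    using pair_notin_Rsl[OF \<alpha>] pair_notin_Rsl[OF g\<alpha>] by auto
  have "op_eq (?f ` ?V - ?f ` {(\<alpha>, \<beta>)}) (relabel ?f (?V - {(\<alpha>, \<beta>)}) (ptrace ?V {(\<alpha>, \<beta>)} ?C))
      (ptrace (?f ` ?V) (?f ` {(\<alpha>, \<beta>)}) (relabel ?f ?V ?C))"
    by (rule relabel_ptrace[OF inj_on_map_prod[OF g(1)]]) simp
  also have "op_eq (?f ` ?V - ?f ` {(\<alpha>, \<beta>)}) \<dots> (boldR X L rA \<sigma> (g \<alpha>) (g \<beta>) ra rb)"
  proof -
    have "op_eq ?V' (relabel ?f ?V ?C) (loc_chain ?V' X L rA \<sigma> (g \<alpha>) (g \<beta>) ra rb)"
      using relabel_loc_chain[where S = ?V, OF g order_refl] unfolding fV .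
    then show ?thesis
      unfolding boldR_eq_ptrace_loc_chain image_insert image_empty map_prod_simp map_prod_image_Rsl[OF g(2)]
      by (rule ptrace_cong[rotated]) simp
  qed
  finally show ?thesis
    unfolding boldR_eq_ptrace_loc_chain[of X L rA \<sigma> \<alpha>] image_insert image_empty map_prod_simp
      map_prod_image_Rsl[OF g(2)] minus .
qed

lemma relabel_layer_chain:
  fixes X :: "('c, 'b::finite) Rfam"
  assumes g: "inj g" "\<And>l. g (A l) = A l" "\<And>m. g (B m) = B m"
    and S: "\<And>m. m < 2 * M \<Longrightarrow> Rsl L (B m) p \<subseteq> S"
  shows "op_eq (map_prod g g ` S) (relabel (map_prod g g) S (layer_chain S X L M rA rB \<sigma> r p))
           (layer_chain (map_prod g g ` S) X L M rA rB \<sigma> r (g p))"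
proof -
  let ?f = "map_prod g g"
  let ?Z = "\<lambda>m q. boldR X L rA (\<sigma> + of_nat (m + 1)) (B m) q (rB m) r"
  have "op_eq (?f ` S) (relabel ?f S (embed S (Rsl L (B m) p) (?Z m p))) (embed (?f ` S) (Rsl L (B m) (g p)) (?Z m (g p)))"
    if "m < 2 * M" for m
  proof -
    have "B m \<notin> range A"
      by auto
    from relabel_boldR[OF g(1,2) this, where \<beta> = p and X = X]
    have "op_eq (Rsl L (B m) (g p)) (relabel ?f (Rsl L (B m) p) (?Z m p)) (?Z m (g p))"
      by (simp only: g(3))
    then show ?thesis
      unfolding relabel_embed[OF inj_on_map_prod[OF g(1)] S[OF that]] map_prod_image_Rsl[OF g(2)] g(3)
      by (rule embed_cong)
  qed
  then have "op_eq (?f ` S) (op_prod (?f ` S) (map (relabel ?f S) (map (\<lambda>m. embed S (Rsl L (B m) p) (?Z m p)) [0..<2 * M])))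
      (layer_chain (?f ` S) X L M rA rB \<sigma> r (g p))"
    unfolding layer_chain_def map_map by (intro op_prod_cong) (simp add: o_def)
  then show ?thesis
    unfolding layer_chain_def by (rule op_eq_trans[OF relabel_prod[OF inj_on_map_prod[OF g(1)]]])
qed

lemma Tlayer_at_aux_plane:
  fixes X :: "('c, 'b::finite) Rfam"
  shows "op_eq (Wsl L M) (ptrace (Wsl L M \<union> aux_slots L (E k)) (aux_slots L (E k))
           (layer_chain (Wsl L M \<union> aux_slots L (E k)) X L M rA rB \<sigma> r (E k)))
         (Tlayer X L M rA rB \<sigma> r)"
proof -
  let ?g = "Transposition.transpose (E 0) (E k)"
  let ?f = "map_prod ?g ?g"
  let ?W = "Wsl L M"
  let ?S0 = "?W \<union> aux_slots L (E 0)" and ?S1 = "?W \<union> aux_slots L (E k)"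
  have g: "inj ?g" "\<And>l. ?g (A l) = A l" "\<And>m. ?g (B m) = B m" "?g (E 0) = E k"
    by (simp_all add: inj_transpose)
  have f_W: "\<And>s. s \<in> ?W \<Longrightarrow> ?f s = s"
    using g(2,3) by (auto simp: Wsl_def)
  have f_aux: "?f ` aux_slots L (E 0) = aux_slots L (E k)"
    using g(2,4) by (simp add: aux_slots_eq_image image_image)
  have f_S0: "?f ` ?S0 = ?S1"
    using f_W f_aux by (simp add: image_Un)
  have minus: "?S0 - aux_slots L (E 0) = ?W" "?S1 - aux_slots L (E k) = ?W"
    using Wsl_aux_slots_disjoint by blast+
  have "op_eq ?W (Tlayer X L M rA rB \<sigma> r) (relabel ?f ?W (Tlayer X L M rA rB \<sigma> r))"
    by (rule op_eq_sym[OF relabel_fixed[OF f_W]])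
  also have "op_eq ?W \<dots> (ptrace ?S1 (aux_slots L (E k)) (relabel ?f ?S0 (layer_chain ?S0 X L M rA rB \<sigma> r (E 0))))"
  proof -
    have "op_eq (?f ` ?S0 - ?f ` aux_slots L (E 0))
        (relabel ?f (?S0 - aux_slots L (E 0)) (ptrace ?S0 (aux_slots L (E 0)) (layer_chain ?S0 X L M rA rB \<sigma> r (E 0))))
        (ptrace (?f ` ?S0) (?f ` aux_slots L (E 0)) (relabel ?f ?S0 (layer_chain ?S0 X L M rA rB \<sigma> r (E 0))))"
      by (rule relabel_ptrace[OF inj_on_map_prod[OF g(1)]]) simp
    then show ?thesis
      unfolding f_S0 f_aux minus Tlayer_eq_ptrace_layer_chain .
  qed
  also have "op_eq ?W \<dots> (ptrace ?S1 (aux_slots L (E k)) (layer_chain ?S1 X L M rA rB \<sigma> r (E k)))"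
  proof -
    have "op_eq (?f ` ?S0) (relabel ?f ?S0 (layer_chain ?S0 X L M rA rB \<sigma> r (E 0)))
        (layer_chain (?f ` ?S0) X L M rA rB \<sigma> r (?g (E 0)))"
      by (rule relabel_layer_chain[OF g(1-3) Rsl_B_subset_Wsl_aux])
    then have "op_eq ?S1 (relabel ?f ?S0 (layer_chain ?S0 X L M rA rB \<sigma> r (E 0)))
        (layer_chain ?S1 X L M rA rB \<sigma> r (E k))"
      unfolding f_S0 g(4) .
    from ptrace_cong[OF Un_upper2 this] show ?thesis
      unfolding minus(2) .
  qed
  finally show ?thesis
    by (rule op_eq_sym)
qed

lemma Rsl_commute: "Rsl L \<alpha> \<beta> = Rsl L \<beta> \<alpha>"
  by (auto simp: Rsl_def)

lemma acts_on_layer_chain: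
  fixes X :: "('c, 'b::finite) Rfam"
  assumes "finite S" "Wsl L M \<union> aux_slots L p \<subseteq> S"
  shows "acts_on S (Wsl L M \<union> aux_slots L p) (layer_chain S X L M rA rB \<sigma> r p)"
  unfolding layer_chain_def
proof (rule acts_on_prod[OF assms])
  fix P assume "P \<in> set (map (\<lambda>m. embed S (Rsl L (B m) p) (boldR X L rA (\<sigma> + of_nat (m + 1)) (B m) p (rB m) r)) [0..<2 * M])"
  then obtain m where m: "m < 2 * M"
    and P: "P = embed S (Rsl L (B m) p) (boldR X L rA (\<sigma> + of_nat (m + 1)) (B m) p (rB m) r)"
    by auto
  have "Rsl L (B m) p \<subseteq> S"
    using Rsl_B_subset_Wsl_aux[OF m] assms(2) by blast
  then show "acts_on S (Wsl L M \<union> aux_slots L p) P"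
    unfolding P by (rule acts_on_mono[OF acts_on_embed Rsl_B_subset_Wsl_aux[OF m] assms(2)])
qed

lemma ptrace_layer_chain:
  fixes X :: "('c, 'b::finite) Rfam"
  assumes S: "finite S" "Wsl L M \<union> aux_slots L (E k) \<subseteq> S"
  shows "op_eq (Wsl L M) (ptrace S (aux_slots L (E k)) (layer_chain S X L M rA rB \<sigma> r (E k)))
           (Tlayer X L M rA rB \<sigma> r)"
proof -
  let ?W = "Wsl L M" and ?T = "aux_slots L (E k)"
  have W: "?W \<union> ?T - ?T = ?W" "?W \<subseteq> S - ?T"
    using Wsl_aux_slots_disjoint S(2) by blast+
  have "op_eq (S - ?T) (ptrace S ?T (layer_chain S X L M rA rB \<sigma> r (E k)))
      (embed (S - ?T) (?W \<union> ?T - ?T) (ptrace (?W \<union> ?T) ?T (layer_chain (?W \<union> ?T) X L M rA rB \<sigma> r (E k))))"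
    unfolding layer_chain_def by (rule ptrace_prod_embed[OF S]) (auto dest: Rsl_B_subset_Wsl_aux)
  then have "op_eq ?W (ptrace S ?T (layer_chain S X L M rA rB \<sigma> r (E k)))
      (embed ?W ?W (ptrace (?W \<union> ?T) ?T (layer_chain (?W \<union> ?T) X L M rA rB \<sigma> r (E k))))"
    unfolding W(1) using op_eq_trans[OF op_eq_subset[OF _ W(2)] embed_subset[OF order_refl W(2)]] by blast
  then show ?thesis
    by (rule op_eq_trans[OF _ op_eq_trans[OF embed_self Tlayer_at_aux_plane]])
qed

lemma Tlayer_mult_eq_ptrace:
  fixes X Y :: "('c, 'b::finite) Rfam"
  assumes "j \<noteq> k"
  shows "op_eq (Wsl L M) (op_mult (Wsl L M) (Tlayer X L M rA rB \<sigma> r) (Tlayer Y L M rA rB \<sigma>' r'))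
     (ptrace (Wsl L M \<union> Rsl L (E j) (E k)) (Rsl L (E j) (E k))
        (op_mult (Wsl L M \<union> Rsl L (E j) (E k))
           (layer_chain (Wsl L M \<union> Rsl L (E j) (E k)) X L M rA rB \<sigma> r (E j))
           (layer_chain (Wsl L M \<union> Rsl L (E j) (E k)) Y L M rA rB \<sigma>' r' (E k))))"
proof -
  let ?W = "Wsl L M" and ?Tj = "aux_slots L (E j)" and ?Tk = "aux_slots L (E k)"
  let ?S = "?W \<union> Rsl L (E j) (E k)"
  have S: "finite ?S" "?W \<union> ?Tj \<subseteq> ?S" "?W \<union> ?Tk \<subseteq> ?S" "?S - (?Tj \<union> ?Tk) = ?W"
    using Wsl_aux_slots_disjoint by (auto simp: Rsl_eq_aux_slots)
  have "?Tj \<inter> ?Tk = {}"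
    using assms by (auto simp: aux_slots_eq_image)
  then have disj: "?Tj \<inter> (?W \<union> ?Tk) = {}" "?Tk \<inter> (?W \<union> ?Tj) = {}"
    using Wsl_aux_slots_disjoint by blast+
  have "op_eq ?W (ptrace ?S (?Tj \<union> ?Tk) (op_mult ?S (layer_chain ?S X L M rA rB \<sigma> r (E j))
        (layer_chain ?S Y L M rA rB \<sigma>' r' (E k))))
      (op_mult ?W (ptrace ?S ?Tj (layer_chain ?S X L M rA rB \<sigma> r (E j)))
        (ptrace ?S ?Tk (layer_chain ?S Y L M rA rB \<sigma>' r' (E k))))"
    using ptrace_mult_disjoint[OF S(1) acts_on_layer_chain[OF S(1,2)] acts_on_layer_chain[OF S(1,3)] _ _ disj]
    unfolding S(4) by simp
  also have "op_eq ?W \<dots> (op_mult ?W (Tlayer X L M rA rB \<sigma> r) (Tlayer Y L M rA rB \<sigma>' r'))"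
    using S by (intro op_mult_cong ptrace_layer_chain) auto
  finally show ?thesis
    unfolding Rsl_eq_aux_slots[of L "E j"] by (rule op_eq_sym)
qed

lemma layer_chain_mult_distrib:
  fixes X Y :: "('c, 'b::finite) Rfam"
  assumes S: "finite S" "Wsl L M \<union> aux_slots L (E j) \<subseteq> S" "Wsl L M \<union> aux_slots L (E k) \<subseteq> S"
    and jk: "j \<noteq> k"
  shows "op_eq S (op_mult S (layer_chain S X L M rA rB \<sigma> r (E j)) (layer_chain S Y L M rA rB \<sigma>' r' (E k)))
     (op_prod S (map (\<lambda>m. op_mult S
        (embed S (Rsl L (B m) (E j)) (boldR X L rA (\<sigma> + of_nat (m + 1)) (B m) (E j) (rB m) r))
        (embed S (Rsl L (B m) (E k)) (boldR Y L rA (\<sigma>' + of_nat (m + 1)) (B m) (E k) (rB m) r'))) [0..<2 * M]))"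
  unfolding layer_chain_def
proof (rule op_eq_sym[OF op_prod_mult_distrib[OF S(1)]])
  fix m n assume mn: "m < n" "n < 2 * M"
  have sub: "Rsl L (B m) (E k) \<subseteq> S" "Rsl L (B n) (E j) \<subseteq> S"
    using Rsl_B_subset_Wsl_aux[of m M L "E k"] Rsl_B_subset_Wsl_aux[OF mn(2), of L "E j"] mn S by auto
  have disj: "Rsl L (B m) (E k) \<inter> Rsl L (B n) (E j) = {}"
    using mn jk by (auto simp: Rsl_def)
  show "commutes S (embed S (Rsl L (B m) (E k)) (boldR Y L rA (\<sigma>' + of_nat (m + 1)) (B m) (E k) (rB m) r'))
      (embed S (Rsl L (B n) (E j)) (boldR X L rA (\<sigma> + of_nat (n + 1)) (B n) (E j) (rB n) r))"
    by (rule acts_on_disjoint_commutes[OF S(1) acts_on_embed[OF sub(1)] acts_on_embed[OF sub(2)] disj])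
qed

text \<open>The \<open>m\<close>-th bold Yang--Baxter equation is taken with colour \<open>\<sigma> + m\<close>.\<close>

lemma layer_chains_exchange:
  fixes R R1 R2 R3 :: "('c, 'b::finite) Rfam"
  assumes bte: "\<And>\<sigma>. BTE R R1 R2 R3 \<sigma>" and inv3: "\<And>\<sigma> r1 r2 r3. invertible3 (R3 \<sigma> r1 r2 r3)"
    and inv: "op_invertible (Rsl L (E 0) (E 1)) (boldR R2 L rA \<sigma> (E 0) (E 1) r r')"
    and S: "S = Wsl L M \<union> Rsl L (E 0) (E 1)"
  shows "op_eq (Wsl L M)
     (ptrace S (Rsl L (E 0) (E 1))
        (op_mult S (layer_chain S R L M rA rB \<sigma> r (E 0)) (layer_chain S R1 L M rA rB (\<sigma> + 1) r' (E 1))))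
     (ptrace S (Rsl L (E 0) (E 1))
        (op_mult S (layer_chain S R1 L M rA rB \<sigma> r' (E 1)) (layer_chain S R L M rA rB (\<sigma> + 1) r (E 0))))"
proof -
  let ?T = "Rsl L (E 0) (E 1)"
  have finS: "finite S" and ST: "S - ?T = Wsl L M"
    using S Wsl_aux_slots_disjoint by (auto simp: Rsl_eq_aux_slots)
  have sub: "Rsl L (B m) (E 0) \<subseteq> S" "Rsl L (B m) (E 1) \<subseteq> S" if "m < 2 * M" for m
    using Rsl_B_subset_Wsl_aux[OF that] S by (auto simp: Rsl_eq_aux_slots)
  have aux: "Wsl L M \<union> aux_slots L (E 0) \<subseteq> S" "Wsl L M \<union> aux_slots L (E 1) \<subseteq> S"
    using S by (auto simp: Rsl_eq_aux_slots)
  define Rm where "Rm c m = embed S (Rsl L (B m) (E 0)) (boldR R L rA c (B m) (E 0) (rB m) r)" for c m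
  define Dm where "Dm c m = embed S (Rsl L (B m) (E 1)) (boldR R1 L rA c (B m) (E 1) (rB m) r')" for c m
  define G where "G i = embed S ?T (boldR R2 L rA (\<sigma> + of_nat i) (E 0) (E 1) r r')" for i
  define X where "X m = op_mult S (Rm (\<sigma> + of_nat (m + 1)) m) (Dm (\<sigma> + 1 + of_nat (m + 1)) m)" for m
  define Y where "Y m = op_mult S (Dm (\<sigma> + of_nat (m + 1)) m) (Rm (\<sigma> + 1 + of_nat (m + 1)) m)" for m
  have step: "op_eq S (op_mult S (X m) (G (Suc m))) (op_mult S (G m) (Y m))" if "m < 2 * M" for m
  proof -
    let ?\<tau> = "\<sigma> + 1 + of_nat (m + 1)"
    have e0: "\<sigma> + of_nat m = ?\<tau>" and e1: "?\<tau> + 1 = \<sigma> + of_nat (m + 1)"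
      using bit_add_one_of_nat_Suc[of \<sigma> m] by (simp_all add: ac_simps)
    have "(B m, E 0) \<notin> S" "(B m, E 1) \<notin> S" "(E 0, E 1) \<notin> S"
      using S by (auto simp: Rsl_def Wsl_def)
    then have "op_eq S (op_mult S (Rm (?\<tau> + 1) m) (op_mult S (Dm ?\<tau> m) (G (Suc m))))
        (op_mult S (G m) (op_mult S (Dm (?\<tau> + 1) m) (Rm ?\<tau> m)))"
      unfolding Rm_def Dm_def G_def Suc_eq_plus1 e0 e1[symmetric]
      using sub[OF that] S by (intro bold_YBE[OF bte inv3 finS]) (auto simp: Rsl_eq_aux_slots)
    then show ?thesis
      unfolding X_def Y_def e1 by (rule op_eq_trans[OF op_mult_assoc[OF finS]])
  qed
  have T: "?T \<subseteq> S"
    using S by simp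
  have rail: "op_eq (S - ?T) (ptrace S ?T (op_prod S (map X [0..<2 * M]))) (ptrace S ?T (op_prod S (map Y [0..<2 * M])))"
    by (rule ptrace_prod_intertwined[where X = X and Y = Y and G = G, OF finS T inv _ _ step]) (simp_all add: G_def)
  have lhs: "op_eq S (op_mult S (layer_chain S R L M rA rB \<sigma> r (E 0)) (layer_chain S R1 L M rA rB (\<sigma> + 1) r' (E 1)))
      (op_prod S (map X [0..<2 * M]))"
    unfolding X_def Rm_def Dm_def by (rule layer_chain_mult_distrib[OF finS aux]) simp
  have rhs: "op_eq S (op_mult S (layer_chain S R1 L M rA rB \<sigma> r' (E 1)) (layer_chain S R L M rA rB (\<sigma> + 1) r (E 0)))
      (op_prod S (map Y [0..<2 * M]))"
    unfolding Y_def Rm_def Dm_def by (rule layer_chain_mult_distrib[OF finS aux(2,1)]) simp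
  show ?thesis
    using op_eq_trans[OF ptrace_cong[OF T lhs] op_eq_trans[OF rail op_eq_sym[OF ptrace_cong[OF T rhs]]]]
    unfolding ST .
qed

theorem mainTheorem2:
  fixes R R1 R2 R3 :: "('c, 'b::finite) Rfam"
    and L M :: nat and rA rB :: "nat \<Rightarrow> 'c"
  assumes "L \<ge> 1" and "M \<ge> 1"
    and "\<And>\<sigma>. BTE R R1 R2 R3 \<sigma>"
    and "\<And>\<sigma> r1 r2 r3. invertible3 (R3 \<sigma> r1 r2 r3)"
    and "\<And>\<sigma> r3 r4. op_invertible (Rsl L (E 0) (E 1)) (boldR R2 L rA \<sigma> (E 0) (E 1) r3 r4)"
  shows "\<forall>\<sigma> r r'. op_eq (Wsl L M)
           (op_mult (Wsl L M) (Tlayer R L M rA rB \<sigma> r) (Tlayer R1 L M rA rB (\<sigma> + 1) r'))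
           (op_mult (Wsl L M) (Tlayer R1 L M rA rB \<sigma> r') (Tlayer R L M rA rB (\<sigma> + 1) r))"
proof (intro allI)
  fix \<sigma> :: bit and r r' :: 'c
  let ?W = "Wsl L M" and ?T = "Rsl L (E 0) (E 1)"
  let ?S = "?W \<union> ?T"
  have "op_eq ?W (op_mult ?W (Tlayer R L M rA rB \<sigma> r) (Tlayer R1 L M rA rB (\<sigma> + 1) r'))
      (ptrace ?S ?T (op_mult ?S (layer_chain ?S R L M rA rB \<sigma> r (E 0)) (layer_chain ?S R1 L M rA rB (\<sigma> + 1) r' (E 1))))"
    by (rule Tlayer_mult_eq_ptrace) simp
  also have "op_eq ?W \<dots>
      (ptrace ?S ?T (op_mult ?S (layer_chain ?S R1 L M rA rB \<sigma> r' (E 1)) (layer_chain ?S R L M rA rB (\<sigma> + 1) r (E 0))))"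
    by (rule layer_chains_exchange[OF assms(3,4,5) refl])
  also have "op_eq ?W \<dots> (op_mult ?W (Tlayer R1 L M rA rB \<sigma> r') (Tlayer R L M rA rB (\<sigma> + 1) r))"
  proof -
    have "op_eq ?W (op_mult ?W (Tlayer R1 L M rA rB \<sigma> r') (Tlayer R L M rA rB (\<sigma> + 1) r))
      (ptrace (?W \<union> Rsl L (E 1) (E 0)) (Rsl L (E 1) (E 0)) (op_mult (?W \<union> Rsl L (E 1) (E 0))
         (layer_chain (?W \<union> Rsl L (E 1) (E 0)) R1 L M rA rB \<sigma> r' (E 1))
         (layer_chain (?W \<union> Rsl L (E 1) (E 0)) R L M rA rB (\<sigma> + 1) r (E 0))))"
      by (rule Tlayer_mult_eq_ptrace) simp
    then show ?thesis
      unfolding Rsl_commute[of L "E 1" "E 0"] by (rule op_eq_sym)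
  qed
  finally show "op_eq ?W (op_mult ?W (Tlayer R L M rA rB \<sigma> r) (Tlayer R1 L M rA rB (\<sigma> + 1) r'))
      (op_mult ?W (Tlayer R1 L M rA rB \<sigma> r') (Tlayer R L M rA rB (\<sigma> + 1) r))" .
qed

end
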